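(* Let $\mathcal N=(\mathcal S,\mathcal C,\mathcal R)$ be a chemical reaction network, $k\in\mathbb R^r_{>0}$, and $\mathcal M=(\mathcal S,\mathcal C,\mathcal R,k)$ the associated mass action system. Let $\tilde{\mathcal N}=(\mathcal S,\tilde{\mathcal C},\mathcal{CR}_K,\tilde{\mathcal R})$ be an improper translation of $\mathcal N$ which is strongly resolvable and has structural deficiency $\tilde\delta=0$, and let $\tilde{\mathcal M}=(\mathcal S,\tilde{\mathcal C},\mathcal{CR}_K,\tilde{\mathcal R},\tilde k)$ be the improperly translated mass action system. Then the (positive) steady states of the system governing $\tilde{\mathcal M}$ coincide with those of the system governing $\mathcal M$.
   Context: A chemical reaction network $\mathcal N=(\mathcal S,\mathcal C,\mathcal R)$ consists of species $\mathcal A_1,\dots,\mathcal A_m$, pairwise distinct complexes $\mathcal C_1,\dots,\mathcal C_n$ with stoichiometric vectors $y_1,\dots,y_n\in\mathbb Z^m_{\ge 0}$, and reactions $\mathcal R_1,\dots,\mathcal R_r$, where $\mathcal R_i$ is $\mathcal C_{\rho(i)}\to\mathcal C_{\rho'(i)}$ with $\rho(i)\neq\rho'(i)$; every species appears in some complex and every complex in some reaction. Complexes and reactions are identified with their indices; $\mathcal{CR}=\{\rho(i)\}$ is the reactant complex set; $\mathbf x^{y}=\prod_j x_j^{y_j}$. The mass action system $\mathcal M=(\mathcal S,\mathcal C,\mathcal R,k)$ is $\dot{\mathbf x}=\sum_{i}k_i(y_{\rho'(i)}-y_{\rho(i)})\mathbf x^{y_{\rho(i)}}$ on $\mathbb R^m_{>0}$;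 steady states are taken in $\mathbb R^m_{>0}$. Linkage classes are connected components of the underlying undirected reaction graph; weakly reversible means every reaction $\mathcal C_a\to\mathcal C_b$ admits a directed path from $\mathcal C_b$ back to $\mathcal C_a$. A translation $\tilde{\mathcal N}=(\mathcal S,\tilde{\mathcal C},\mathcal{CR}_K,\tilde{\mathcal R})$ of $\mathcal N$: $(\mathcal S,\tilde{\mathcal C},\tilde{\mathcal R})$ is a chemical reaction network with complexes $\tilde{\mathcal C}_1,\dots,\tilde{\mathcal C}_{\tilde n}$ (vectors $\tilde y_j$), reactions $\tilde{\mathcal R}_l:\tilde{\mathcal C}_{\tilde\rho(l)}\to\tilde{\mathcal C}_{\tilde\rho'(l)}$, reactant complex set $\tilde{\mathcal{CR}}$, and $\mathcal{CR}_K\subseteq\mathcal{CR}$, such that (1) there is a bijection $h_1:\mathcal R\to\tilde{\mathcal R}$ preserving reaction vectors: $\tilde y_{\tilde\rho'(h_1(i))}-\tilde y_{\tilde\rho(h_1(i))}=y_{\rho'(i)}-y_{\rho(i)}$; (2) there is a surjection $h_2:\mathcal{CR}\to\tilde{\mathcal{CR}}$ with $h_2(\rho(i))=\tilde\rho(h_1(i))$; (3) for each $j\in\tilde{\mathcal{CR}}$, $\mathcal{CR}_K$ contains exactly one element $\kappa(j)$ of $h_2^{-1}(j)$, the kinetic complex of $\tilde{\mathcal C}_j$ (non-reactant complexes get arbitrary kinetic complexes in $\mathcal{CR}_K$). It is improper if $h_2$ is not injective, strong if $\tilde{\mathcal N}$ is weakly reversible. Kinetic-order subspace: $\tilde S=\mathrm{span}\{y_{\kappa(\tilde\rho'(l))}-y_{\kappa(\tilde\rho(l))}\}$.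 Structural deficiency: $\tilde\delta=\dim(\ker\tilde Y\cap\mathrm{Im}\,\tilde I_a)$, where $\tilde Y$ has columns $\tilde y_j$ and $\tilde I_a\in\mathbb Z^{\tilde n\times r}$ has, in the column of reaction $\tilde{\mathcal R}_l$, entry $-1$ in row $\tilde\rho(l)$, $+1$ in row $\tilde\rho'(l)$, and $0$ elsewhere. Improper reactions: $\mathcal R_I=\{i:\rho(i)\in\mathcal{CR}\setminus\mathcal{CR}_K\}$; $\rho(i)_K$ is the unique element of $h_2^{-1}(h_2(\rho(i)))\cap\mathcal{CR}_K$. $\tilde S_I=\mathrm{span}\{y_{\rho(i)}-y_{\rho(i)_K}:i\in\mathcal R_I\}$. Weakly resolvable: $\tilde{\mathcal N}$ strong and $\tilde S_I\subseteq\tilde S$. In that case fix a basis $\{y_{p_j}-y_{q_j}\}_{j=1}^{\tilde s}$ of $\tilde S$ with $p_j,q_j\in\mathcal{CR}_K$ and $h_2(p_j),h_2(q_j)$ in the same linkage class of $\tilde{\mathcal N}$, and for $i\in\mathcal R_I$ let $c^{(i)}_j$ be the coordinates: $y_{\rho(i)}-y_{\rho(i)_K}=\sum_j c^{(i)}_j(y_{p_j}-y_{q_j})$. Tree constants: for a weakly reversible directed graph with edge weights, a spanning $a$-tree is a subgraph spanning the linkage class of vertex $a$, with no cycles, and with $a$ as unique sink; the tree constant of $a$ is the sum over spanning $a$-trees of the product of their edge weights. The semi-proper reaction graph of $\tilde{\mathcal N}$ is its reaction graph with edge $h_1(i)$ weighted $k_i$ if $i\notin\mathcal R_I$ and by an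 indeterminate positive $\tilde k_i$ if $i\in\mathcal R_I$; let $\tilde K_a$ be its tree constants (polynomials in these weights). The strong kinetic adjustment factor of $i\in\mathcal R_I$ is $\tilde K_{\rho(i),\rho(i)_K}=\prod_j(\tilde K_{h_2(p_j)}/\tilde K_{h_2(q_j)})^{c^{(i)}_j}$. $\tilde{\mathcal N}$ is strongly resolvable if it is weakly resolvable and, for every $i\in\mathcal R_I$, $\tilde K_{\rho(i),\rho(i)_K}$ does not depend on any $\tilde k_{j}$, $j\in\mathcal R_I$. The improperly translated mass action system $\tilde{\mathcal M}$ is the generalized mass action system $\dot{\mathbf x}=\sum_l\tilde k_l(\tilde y_{\tilde\rho'(l)}-\tilde y_{\tilde\rho(l)})\mathbf x^{y_{\kappa(\tilde\rho(l))}}$ with rate constants $\tilde k_{h_1(i)}=k_i$ for $i\notin\mathcal R_I$ and $\tilde k_{h_1(i)}=\tilde K_{\rho(i),\rho(i)_K}\,k_i$ for $i\in\mathcal R_I$. *)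

theory Defs
  imports "HOL-Analysis.Analysis" "HOL-Library.Function_Algebras"
begin

text \<open>Species are indexed by 0..<m, complexes by 0..<n, reactions by 0..<r.
  A stoichiometric vector is a function nat => nat (only the entries below m matter).
  Vectors in R^m (resp. R^n) are represented as functions nat => real; linear algebra
  on them is done with the vector space structure given by pointwise scaling fscale.\<close>

definition fscale :: "real \<Rightarrow> (nat \<Rightarrow> real) \<Rightarrow> nat \<Rightarrow> real" where
  "fscale c f = (\<lambda>x. c * f x)"

lemma vector_space_fscale: "vector_space fscale"
  by unfold_locales (auto simp: fscale_def algebra_simps fun_eq_iff)

abbreviation fspan :: "(nat \<Rightarrow> real) set \<Rightarrow> (nat \<Rightarrow> real) set" where
  "fspan \<equiv> module.span fscale"

abbreviation findependent :: "(nat \<Rightarrow> real) set \<Rightarrow> bool" where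
  "findependent A \<equiv> \<not> module.dependent fscale A"

abbreviation fdim :: "(nat \<Rightarrow> real) set \<Rightarrow> nat" where
  "fdim \<equiv> vector_space.dim fscale"

definition cvec :: "nat \<Rightarrow> (nat \<Rightarrow> nat) \<Rightarrow> nat \<Rightarrow> real" where
  "cvec m v = (\<lambda>s. if s < m then real (v s) else 0)"

definition monom :: "nat \<Rightarrow> (nat \<Rightarrow> real) \<Rightarrow> (nat \<Rightarrow> nat) \<Rightarrow> real" where
  "monom m x v = (\<Prod>s<m. x s ^ v s)"

text \<open>Chemical reaction network with m species, n complexes (vectors y 0..y (n-1)),
  r reactions, reaction i being complex rho i -> complex rho' i.\<close>
definition is_crn :: "nat \<Rightarrow> nat \<Rightarrow> nat \<Rightarrow> (nat \<Rightarrow> nat \<Rightarrow> nat) \<Rightarrow> (nat \<Rightarrow> nat) \<Rightarrow> (nat \<Rightarrow> nat) \<Rightarrow> bool" where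
  "is_crn m n r y rho rho' \<longleftrightarrow>
     (\<forall>i<r. rho i < n \<and> rho' i < n \<and> rho i \<noteq> rho' i) \<and>
     (\<forall>a<n. \<forall>b<n. a \<noteq> b \<longrightarrow> (\<exists>s<m. y a s \<noteq> y b s)) \<and>
     (\<forall>s<m. \<exists>j<n. y j s > 0) \<and>
     (\<forall>j<n. \<exists>i<r. rho i = j \<or> rho' i = j)"

definition reactant_set :: "nat \<Rightarrow> (nat \<Rightarrow> nat) \<Rightarrow> nat set" where
  "reactant_set r rho = rho ` {..<r}"

definition mas_rhs :: "nat \<Rightarrow> nat \<Rightarrow> (nat \<Rightarrow> nat \<Rightarrow> nat) \<Rightarrow> (nat \<Rightarrow> nat) \<Rightarrow> (nat \<Rightarrow> nat)
    \<Rightarrow> (nat \<Rightarrow> real) \<Rightarrow> (nat \<Rightarrow> real) \<Rightarrow> nat \<Rightarrow> real" where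
  "mas_rhs m r y rho rho' k x = (\<lambda>s. \<Sum>i<r. k i * (real (y (rho' i) s) - real (y (rho i) s)) * monom m x (y (rho i)))"

definition pos_steady_states :: "nat \<Rightarrow> ((nat \<Rightarrow> real) \<Rightarrow> nat \<Rightarrow> real) \<Rightarrow> (nat \<Rightarrow> real) set" where
  "pos_steady_states m F = {x. (\<forall>s<m. x s > 0) \<and> (\<forall>s<m. F x s = 0)}"

definition edge_rel :: "nat set \<Rightarrow> (nat \<Rightarrow> nat) \<Rightarrow> (nat \<Rightarrow> nat) \<Rightarrow> (nat \<times> nat) set" where
  "edge_rel E rho rho' = {(rho l, rho' l) | l. l \<in> E}"

definition weakly_reversible :: "nat \<Rightarrow> (nat \<Rightarrow> nat) \<Rightarrow> (nat \<Rightarrow> nat) \<Rightarrow> bool" where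
  "weakly_reversible r rho rho' \<longleftrightarrow>
     (\<forall>l<r. (rho' l, rho l) \<in> (edge_rel {..<r} rho rho')\<^sup>*)"

definition linkage_class :: "nat \<Rightarrow> (nat \<Rightarrow> nat) \<Rightarrow> (nat \<Rightarrow> nat) \<Rightarrow> nat \<Rightarrow> nat set" where
  "linkage_class r rho rho' a =
     {b. (a, b) \<in> (edge_rel {..<r} rho rho' \<union> (edge_rel {..<r} rho rho')\<inverse>)\<^sup>*}"

definition has_cycle :: "nat set \<Rightarrow> (nat \<Rightarrow> nat) \<Rightarrow> (nat \<Rightarrow> nat) \<Rightarrow> bool" where
  "has_cycle T rho rho' \<longleftrightarrow>
     (\<exists>es vs. length es = length vs \<and> length es \<ge> 2 \<and> distinct es \<and> distinct vs \<and> set es \<subseteq> T \<and>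
        (\<forall>i<length es. {rho (es ! i), rho' (es ! i)} = {vs ! i, vs ! ((i + 1) mod length es)}))"

definition spanning_tree :: "nat \<Rightarrow> (nat \<Rightarrow> nat) \<Rightarrow> (nat \<Rightarrow> nat) \<Rightarrow> nat \<Rightarrow> nat set \<Rightarrow> bool" where
  "spanning_tree r rho rho' a T \<longleftrightarrow>
     T \<subseteq> {..<r} \<and>
     (\<forall>l\<in>T. rho l \<in> linkage_class r rho rho' a \<and> rho' l \<in> linkage_class r rho rho' a) \<and>
     (\<forall>v\<in>linkage_class r rho rho' a. (a, v) \<in> (edge_rel T rho rho' \<union> (edge_rel T rho rho')\<inverse>)\<^sup>*) \<and>
     \<not> has_cycle T rho rho' \<and>
     (\<forall>l\<in>T. rho l \<noteq> a) \<and>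
     (\<forall>v\<in>linkage_class r rho rho' a. v \<noteq> a \<longrightarrow> (\<exists>l\<in>T. rho l = v))"

definition tree_const :: "nat \<Rightarrow> (nat \<Rightarrow> nat) \<Rightarrow> (nat \<Rightarrow> nat) \<Rightarrow> (nat \<Rightarrow> real) \<Rightarrow> nat \<Rightarrow> real" where
  "tree_const r rho rho' u a = (\<Sum>T\<in>{T. spanning_tree r rho rho' a T}. \<Prod>l\<in>T. u l)"

definition incidence_col :: "(nat \<Rightarrow> nat) \<Rightarrow> (nat \<Rightarrow> nat) \<Rightarrow> nat \<Rightarrow> nat \<Rightarrow> real" where
  "incidence_col rho rho' l = (\<lambda>j. (if j = rho' l then 1 else 0) - (if j = rho l then 1 else 0))"

definition kerY :: "nat \<Rightarrow> nat \<Rightarrow> (nat \<Rightarrow> nat \<Rightarrow> nat) \<Rightarrow> (nat \<Rightarrow> real) set" where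
  "kerY m n y = {v. (\<forall>j. n \<le> j \<longrightarrow> v j = 0) \<and> (\<forall>s<m. (\<Sum>j<n. v j * real (y j s)) = 0)}"

definition struct_deficiency :: "nat \<Rightarrow> nat \<Rightarrow> nat \<Rightarrow> (nat \<Rightarrow> nat \<Rightarrow> nat) \<Rightarrow> (nat \<Rightarrow> nat) \<Rightarrow> (nat \<Rightarrow> nat) \<Rightarrow> nat" where
  "struct_deficiency m n r y rho rho' =
     fdim (kerY m n y \<inter> fspan (incidence_col rho rho' ` {..<r}))"

text \<open>Translation (nt, ty, trho, trho') of (m, n, r, y, rho, rho') with bijection h1 on reaction
  indices, map h2 on reactant complexes, kinetic complex set CRK, and kinetic complex map kap
  (kap j is the kinetic complex of translated complex j).\<close>
definition is_translation :: "nat \<Rightarrow> nat \<Rightarrow> nat \<Rightarrow> (nat \<Rightarrow> nat \<Rightarrow> nat) \<Rightarrow> (nat \<Rightarrow> nat) \<Rightarrow> (nat \<Rightarrow> nat)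
   \<Rightarrow> nat \<Rightarrow> (nat \<Rightarrow> nat \<Rightarrow> nat) \<Rightarrow> (nat \<Rightarrow> nat) \<Rightarrow> (nat \<Rightarrow> nat)
   \<Rightarrow> (nat \<Rightarrow> nat) \<Rightarrow> (nat \<Rightarrow> nat) \<Rightarrow> nat set \<Rightarrow> (nat \<Rightarrow> nat) \<Rightarrow> bool" where
  "is_translation m n r y rho rho' nt ty trho trho' h1 h2 CRK kap \<longleftrightarrow>
     is_crn m nt r ty trho trho' \<and>
     bij_betw h1 {..<r} {..<r} \<and>
     (\<forall>i<r. \<forall>s<m. int (ty (trho' (h1 i)) s) - int (ty (trho (h1 i)) s)
                  = int (y (rho' i) s) - int (y (rho i) s)) \<and>
     h2 ` reactant_set r rho = reactant_set r trho \<and>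
     (\<forall>i<r. h2 (rho i) = trho (h1 i)) \<and>
     CRK \<subseteq> reactant_set r rho \<and>
     (\<forall>j\<in>reactant_set r trho. {c \<in> reactant_set r rho. h2 c = j} \<inter> CRK = {kap j}) \<and>
     (\<forall>j<nt. kap j \<in> CRK)"

definition improper_reactions :: "nat \<Rightarrow> (nat \<Rightarrow> nat) \<Rightarrow> nat set \<Rightarrow> nat set" where
  "improper_reactions r rho CRK = {i. i < r \<and> rho i \<notin> CRK}"

definition kin_order_space :: "nat \<Rightarrow> nat \<Rightarrow> (nat \<Rightarrow> nat \<Rightarrow> nat) \<Rightarrow> (nat \<Rightarrow> nat) \<Rightarrow> (nat \<Rightarrow> nat)
    \<Rightarrow> (nat \<Rightarrow> nat) \<Rightarrow> (nat \<Rightarrow> real) set" where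
  "kin_order_space m r y kap trho trho' =
     fspan {cvec m (y (kap (trho' l))) - cvec m (y (kap (trho l))) | l. l < r}"

definition improper_vec :: "nat \<Rightarrow> (nat \<Rightarrow> nat \<Rightarrow> nat) \<Rightarrow> (nat \<Rightarrow> nat) \<Rightarrow> (nat \<Rightarrow> nat) \<Rightarrow> (nat \<Rightarrow> nat) \<Rightarrow> nat \<Rightarrow> nat \<Rightarrow> real" where
  "improper_vec m y rho h2 kap i = cvec m (y (rho i)) - cvec m (y (kap (h2 (rho i))))"

definition weakly_resolvable :: "nat \<Rightarrow> nat \<Rightarrow> (nat \<Rightarrow> nat \<Rightarrow> nat) \<Rightarrow> (nat \<Rightarrow> nat) \<Rightarrow> (nat \<Rightarrow> nat)
    \<Rightarrow> (nat \<Rightarrow> nat) \<Rightarrow> (nat \<Rightarrow> nat) \<Rightarrow> nat set \<Rightarrow> (nat \<Rightarrow> nat) \<Rightarrow> bool" where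
  "weakly_resolvable m r y rho trho trho' h2 CRK kap \<longleftrightarrow>
     weakly_reversible r trho trho' \<and>
     fspan (improper_vec m y rho h2 kap ` improper_reactions r rho CRK) \<subseteq> kin_order_space m r y kap trho trho'"

definition adapted_basis :: "nat \<Rightarrow> nat \<Rightarrow> (nat \<Rightarrow> nat \<Rightarrow> nat) \<Rightarrow> (nat \<Rightarrow> nat) \<Rightarrow> (nat \<Rightarrow> nat) \<Rightarrow> (nat \<Rightarrow> nat)
    \<Rightarrow> (nat \<Rightarrow> nat) \<Rightarrow> nat set \<Rightarrow> (nat \<Rightarrow> nat)
    \<Rightarrow> nat \<Rightarrow> (nat \<Rightarrow> nat) \<Rightarrow> (nat \<Rightarrow> nat) \<Rightarrow> (nat \<Rightarrow> nat \<Rightarrow> real) \<Rightarrow> bool" where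
  "adapted_basis m r y rho trho trho' h2 CRK kap sd p q c \<longleftrightarrow>
     (\<forall>j<sd. p j \<in> CRK \<and> q j \<in> CRK \<and> h2 (q j) \<in> linkage_class r trho trho' (h2 (p j))) \<and>
     inj_on (\<lambda>j. cvec m (y (p j)) - cvec m (y (q j))) {..<sd} \<and>
     findependent ((\<lambda>j. cvec m (y (p j)) - cvec m (y (q j))) ` {..<sd}) \<and>
     fspan ((\<lambda>j. cvec m (y (p j)) - cvec m (y (q j))) ` {..<sd}) = kin_order_space m r y kap trho trho' \<and>
     (\<forall>i\<in>improper_reactions r rho CRK.
        improper_vec m y rho h2 kap i = (\<Sum>j<sd. fscale (c i j) (cvec m (y (p j)) - cvec m (y (q j)))))"

definition semi_proper_weights :: "nat \<Rightarrow> (nat \<Rightarrow> nat) \<Rightarrow> nat set \<Rightarrow> (nat \<Rightarrow> real) \<Rightarrow> (nat \<Rightarrow> real) \<Rightarrow> bool" where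
  "semi_proper_weights r rho CRK k W \<longleftrightarrow>
     (\<forall>i<r. i \<notin> improper_reactions r rho CRK \<longrightarrow> W i = k i) \<and>
     (\<forall>i\<in>improper_reactions r rho CRK. W i > 0)"

text \<open>Strong kinetic adjustment factor of reaction i, evaluated at semi-proper weights W;
  edge h1 i of the translated graph carries weight W i.\<close>
definition adj_factor :: "nat \<Rightarrow> (nat \<Rightarrow> nat) \<Rightarrow> (nat \<Rightarrow> nat) \<Rightarrow> (nat \<Rightarrow> nat) \<Rightarrow> (nat \<Rightarrow> nat)
    \<Rightarrow> nat \<Rightarrow> (nat \<Rightarrow> nat) \<Rightarrow> (nat \<Rightarrow> nat) \<Rightarrow> (nat \<Rightarrow> nat \<Rightarrow> real) \<Rightarrow> (nat \<Rightarrow> real) \<Rightarrow> nat \<Rightarrow> real" where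
  "adj_factor r trho trho' h1 h2 sd p q c W i =
     (let u = (\<lambda>l. W (the_inv_into {..<r} h1 l)) in
      \<Prod>j<sd. (tree_const r trho trho' u (h2 (p j)) / tree_const r trho trho' u (h2 (q j))) powr (c i j))"

definition strongly_resolvable where
  "strongly_resolvable m r y rho trho trho' h1 h2 CRK kap sd p q c k \<longleftrightarrow>
     weakly_resolvable m r y rho trho trho' h2 CRK kap \<and>
     (\<forall>i\<in>improper_reactions r rho CRK. \<forall>W W'.
        semi_proper_weights r rho CRK k W \<and> semi_proper_weights r rho CRK k W' \<longrightarrow>
        adj_factor r trho trho' h1 h2 sd p q c W i = adj_factor r trho trho' h1 h2 sd p q c W' i)"

text \<open>Rate constants of the improperly translated mass action system (indexed by translated
  reactions l = h1 i). Since the factor does not depend on the free weights, it is evaluated at W = k.\<close>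
definition translated_rates where
  "translated_rates r rho trho trho' h1 h2 CRK sd p q c k =
     (\<lambda>l. let i = the_inv_into {..<r} h1 l in
          if i \<in> improper_reactions r rho CRK
          then adj_factor r trho trho' h1 h2 sd p q c k i * k i else k i)"

definition gmas_rhs :: "nat \<Rightarrow> nat \<Rightarrow> (nat \<Rightarrow> nat \<Rightarrow> nat) \<Rightarrow> (nat \<Rightarrow> nat \<Rightarrow> nat) \<Rightarrow> (nat \<Rightarrow> nat) \<Rightarrow> (nat \<Rightarrow> nat)
    \<Rightarrow> (nat \<Rightarrow> nat) \<Rightarrow> (nat \<Rightarrow> real) \<Rightarrow> (nat \<Rightarrow> real) \<Rightarrow> nat \<Rightarrow> real" where
  "gmas_rhs m r y ty trho trho' kap kt x =
     (\<lambda>s. \<Sum>l<r. kt l * (real (ty (trho' l) s) - real (ty (trho l) s)) * monom m x (y (kap (trho l))))"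

end

theory Submission
  imports Defs
begin

text \<open>At a positive state x the mass-action rate k_i x^{y_\<rho>(i)} of N is the rate of the translated
  reaction h1 i with kinetic monomial x^{y_\<rho>(i)_K} and weight k_i x^{y_\<rho>(i) - y_\<rho>(i)_K}; this
  weight is k_i for proper reactions. So both systems are generalized mass-action systems of the
  translation, differing only in the weights of the improper reactions. At a steady state,
  deficiency zero makes the weighted translation complex balanced, and on a weakly reversible
  graph every positive complex-balanced vector is proportional on each linkage class to the tree
  constants (Kirchhoff's matrix-tree theorem plus a minimum argument). Expanding
  y_\<rho>(i) - y_\<rho>(i)_K in the adapted basis, the weight of an improper reaction is therefore k_i times
  the kinetic adjustment factor at the current weights, which strong resolvability identifies with
  the factor at k. Hence at steady states the two weight vectors agree.\<close>

section \<open>Undirected walks and cycles\<close>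

definition uwalk :: "nat set \<Rightarrow> (nat \<Rightarrow> nat) \<Rightarrow> (nat \<Rightarrow> nat) \<Rightarrow> nat list \<Rightarrow> nat list \<Rightarrow> bool" where
  "uwalk T src tgt vs es \<longleftrightarrow> length vs = Suc (length es) \<and> set es \<subseteq> T \<and>
     (\<forall>i<length es. {src (es ! i), tgt (es ! i)} = {vs ! i, vs ! Suc i})"

lemma uwalk_upt:
  assumes "i \<le> j" "\<And>t. i \<le> t \<Longrightarrow> t < j \<Longrightarrow> e t \<in> T \<and> {src (e t), tgt (e t)} = {f t, f (Suc t)}"
  shows "uwalk T src tgt (map f [i..<Suc j]) (map e [i..<j])"
  using assms unfolding uwalk_def by (auto simp del: upt_Suc)

lemma has_cycle_of_closed_uwalk:
  assumes walk: "uwalk T src tgt (vs @ [hd vs]) es"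
    and "distinct vs" "distinct es" "length es \<ge> 2"
  shows "has_cycle T src tgt"
proof -
  have len: "length es = length vs" using walk by (simp add: uwalk_def)
  have "{src (es ! i), tgt (es ! i)} = {vs ! i, vs ! ((i + 1) mod length es)}" if i: "i < length es" for i
  proof -
    have "(vs @ [hd vs]) ! Suc i = vs ! ((i + 1) mod length es)"
    proof (cases "Suc i < length vs")
      case False
      then have "Suc i = length vs" using i len by simp
      moreover have "vs \<noteq> []" using len assms(4) by auto
      ultimately show ?thesis using len by (simp add: nth_append hd_conv_nth)
    qed (use len in \<open>simp add: nth_append\<close>)
    then show ?thesis using walk i len unfolding uwalk_def by (simp add: nth_append)
  qed
  then show ?thesis unfolding has_cycle_def using assms len walk uwalk_def by metis
qed

lemma uwalk_append:
  assumes "uwalk T src tgt (xs @ [z]) es" "uwalk T src tgt (z # ys) fs"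
  shows "uwalk T src tgt (xs @ z # ys) (es @ fs)"
  using assms unfolding uwalk_def
  by (auto simp: nth_append nth_Cons' split: if_splits)

lemma uwalk_rev:
  assumes "uwalk T src tgt vs es" shows "uwalk T src tgt (rev vs) (rev es)"
proof -
  have "{src (rev es ! i), tgt (rev es ! i)} = {rev vs ! i, rev vs ! Suc i}" if "i < length es" for i
  proof -
    define j where "j = length es - Suc i"
    have "rev vs ! i = vs ! Suc j" "rev vs ! Suc i = vs ! j" "rev es ! i = es ! j"
      using that assms unfolding uwalk_def j_def by (auto simp: rev_nth Suc_diff_Suc)
    moreover have "j < length es" using that unfolding j_def by simp
    ultimately show ?thesis using assms unfolding uwalk_def by (simp add: insert_commute)
  qed
  then show ?thesis using assms unfolding uwalk_def by simp
qed

lemma has_cycle_of_two_paths: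
  assumes xs: "uwalk T src tgt (xs @ [z]) es" and ys: "uwalk T src tgt (ys @ [z]) fs"
    and l: "l \<in> T" "{src l, tgt l} = {hd (ys @ [z]), hd (xs @ [z])}"
    and distinct: "distinct (xs @ z # rev ys)" "distinct (es @ rev fs @ [l])"
    and nontrivial: "es @ fs \<noteq> []"
  shows "has_cycle T src tgt"
proof -
  obtain w ys' where w: "ys @ [z] = w # ys'" by (cases "ys @ [z]") auto
  define vs where "vs = xs @ z # rev ys"
  have vs: "vs = (xs @ rev ys') @ [w]" unfolding vs_def using arg_cong[OF w, of rev] by simp
  have hd_vs: "hd vs = hd (xs @ [z])" unfolding vs_def by (cases xs) auto
  have "uwalk T src tgt (z # rev ys) (rev fs)" using uwalk_rev[OF ys] by simp
  then have "uwalk T src tgt (xs @ z # rev ys) (es @ rev fs)" by (rule uwalk_append[OF xs])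
  then have "uwalk T src tgt ((xs @ rev ys') @ [w]) (es @ rev fs)" using vs unfolding vs_def by simp
  moreover have "uwalk T src tgt (w # [hd vs]) [l]" using l w hd_vs unfolding uwalk_def by auto
  ultimately have "uwalk T src tgt (vs @ [hd vs]) (es @ rev fs @ [l])"
    using uwalk_append vs by fastforce
  moreover have "length (es @ rev fs @ [l]) \<ge> 2" using nontrivial by (auto simp: Suc_le_eq)
  ultimately show ?thesis using has_cycle_of_closed_uwalk distinct unfolding vs_def by blast
qed

section \<open>In-trees of a reaction graph\<close>

lemma inj_on_funpow_until_hit:
  fixes g :: "'a \<Rightarrow> 'a"
  assumes hit: "(g ^^ A) x = a" and first: "\<forall>t<A. (g ^^ t) x \<noteq> a"
  shows "inj_on (\<lambda>t. (g ^^ t) x) {..A}"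
proof (rule inj_onI, rule ccontr)
  have no_repeat: False if "i < j" "j \<le> A" "(g ^^ i) x = (g ^^ j) x" for i j
  proof -
    have "(g ^^ (A - j + i)) x = (g ^^ (A - j)) ((g ^^ i) x)" by (simp only: funpow_add o_apply)
    also have "\<dots> = (g ^^ (A - j)) ((g ^^ j) x)" using that by simp
    also have "\<dots> = (g ^^ (A - j + j)) x" by (simp only: funpow_add o_apply)
    finally have "(g ^^ (A - j + i)) x = a" using that hit by simp
    moreover have "A - j + i < A" using that by simp
    ultimately show False using first by blast
  qed
  fix i j assume "i \<in> {..A}" "j \<in> {..A}" "(g ^^ i) x = (g ^^ j) x" "i \<noteq> j"
  then show False using no_repeat[of i j] no_repeat[of j i] by (cases "i < j") auto
qed

lemma mem_edge_rel: "(a, b) \<in> edge_rel T src tgt \<longleftrightarrow> (\<exists>l\<in>T. a = src l \<and> b = tgt l)"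
  unfolding edge_rel_def by auto

lemma edge_rel_mono: "T \<subseteq> T' \<Longrightarrow> edge_rel T src tgt \<subseteq> edge_rel T' src tgt"
  unfolding edge_rel_def by auto

lemma edge_rel_rtrancl_mono:
  "T \<subseteq> T' \<Longrightarrow> (a, b) \<in> (edge_rel T src tgt)\<^sup>* \<Longrightarrow> (a, b) \<in> (edge_rel T' src tgt)\<^sup>*"
  using rtrancl_mono[OF edge_rel_mono] by blast

locale reaction_graph =
  fixes r :: nat and src tgt :: "nat \<Rightarrow> nat"
  assumes no_self_loop: "l < r \<Longrightarrow> src l \<noteq> tgt l"
begin

abbreviation lc :: "nat \<Rightarrow> nat set" where
  "lc a \<equiv> linkage_class r src tgt a"

lemma lc_refl: "a \<in> lc a"
  by (simp add: linkage_class_def)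

lemma lc_sym:
  assumes "b \<in> lc a" shows "a \<in> lc b"
proof -
  let ?S = "edge_rel {..<r} src tgt \<union> (edge_rel {..<r} src tgt)\<inverse>"
  have "(b, a) \<in> (?S\<inverse>)\<^sup>*" using assms by (simp add: linkage_class_def rtrancl_converse)
  moreover have "?S\<inverse> = ?S" by auto
  ultimately show ?thesis by (simp add: linkage_class_def)
qed

lemma lc_trans: "b \<in> lc a \<Longrightarrow> c \<in> lc b \<Longrightarrow> c \<in> lc a"
  unfolding linkage_class_def by (auto intro: rtrancl_trans)

lemma lc_eq: "b \<in> lc a \<Longrightarrow> lc b = lc a"
  using lc_sym lc_trans by blast

lemma tgt_in_lc:
  assumes "l < r" "src l \<in> lc a" shows "tgt l \<in> lc a"
proof -
  have "tgt l \<in> lc (src l)" using assms(1) by (auto simp: linkage_class_def edge_rel_def)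
  then show ?thesis using assms(2) lc_trans by blast
qed

lemma src_in_lc:
  assumes "l < r" "tgt l \<in> lc a" shows "src l \<in> lc a"
proof -
  have "src l \<in> lc (tgt l)" using assms(1) by (auto simp: linkage_class_def edge_rel_def)
  then show ?thesis using assms(2) lc_trans by blast
qed

lemma finite_lc: "finite (lc a)"
proof (rule finite_subset)
  show "lc a \<subseteq> insert a (src ` {..<r} \<union> tgt ` {..<r})"
  proof
    fix b assume "b \<in> lc a"
    then have "(a, b) \<in> (edge_rel {..<r} src tgt \<union> (edge_rel {..<r} src tgt)\<inverse>)\<^sup>*"
      by (simp add: linkage_class_def)
    then show "b \<in> insert a (src ` {..<r} \<union> tgt ` {..<r})"
    proof (cases rule: rtranclE)
      case (step c)
      then show ?thesis unfolding edge_rel_def by blast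
    qed simp
  qed
qed simp

definition in_tree :: "nat \<Rightarrow> nat set \<Rightarrow> bool" where
  "in_tree a T \<longleftrightarrow> T \<subseteq> {..<r} \<and> (\<forall>l\<in>T. src l \<in> lc a \<and> tgt l \<in> lc a) \<and> (\<forall>l\<in>T. src l \<noteq> a) \<and>
     (\<forall>v\<in>lc a - {a}. \<exists>!l. l \<in> T \<and> src l = v) \<and> (\<forall>v\<in>lc a. (v, a) \<in> (edge_rel T src tgt)\<^sup>*)"

lemma in_treeD:
  assumes "in_tree a T"
  shows "T \<subseteq> {..<r}" "finite T" "\<And>l. l \<in> T \<Longrightarrow> src l \<in> lc a \<and> tgt l \<in> lc a"
    "\<And>l. l \<in> T \<Longrightarrow> src l \<noteq> a" "\<And>v. v \<in> lc a - {a} \<Longrightarrow> \<exists>!l. l \<in> T \<and> src l = v"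
    "\<And>v. v \<in> lc a \<Longrightarrow> (v, a) \<in> (edge_rel T src tgt)\<^sup>*"
  using assms unfolding in_tree_def by (auto intro: finite_subset)

lemma in_tree_out_edge_unique:
  assumes T: "in_tree a T" and "l \<in> T" "l' \<in> T" "src l = src l'"
  shows "l = l'"
proof -
  have "\<exists>!l''. l'' \<in> T \<and> src l'' = src l" using in_treeD(3-5)[OF T] assms(2) by blast
  then show ?thesis using assms(2-4) by auto
qed

lemma in_tree_of_descending_selector:
  fixes d :: "nat \<Rightarrow> nat"
  assumes sg: "\<And>v. v \<in> lc a - {a} \<Longrightarrow> sg v < r \<and> src (sg v) = v \<and> d (tgt (sg v)) < d v"
  shows "in_tree a (sg ` (lc a - {a}))"
proof -
  let ?T = "sg ` (lc a - {a})"
  have reach: "(v, a) \<in> (edge_rel ?T src tgt)\<^sup>*" if "v \<in> lc a" for v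
    using that
  proof (induction "d v" arbitrary: v rule: less_induct)
    case less
    show ?case
    proof (cases "v = a")
      case False
      then have v: "v \<in> lc a - {a}" using less.prems by blast
      then have "tgt (sg v) \<in> lc a" using sg tgt_in_lc less.prems by metis
      then have "(tgt (sg v), a) \<in> (edge_rel ?T src tgt)\<^sup>*" using less.hyps sg[OF v] by blast
      moreover have "(v, tgt (sg v)) \<in> edge_rel ?T src tgt"
        using v sg[OF v] unfolding mem_edge_rel by force
      ultimately show ?thesis by (meson converse_rtrancl_into_rtrancl)
    qed simp
  qed
  have "\<exists>!l. l \<in> ?T \<and> src l = v" if v: "v \<in> lc a - {a}" for v
  proof (rule ex1I[of _ "sg v"])
    show "sg v \<in> ?T \<and> src (sg v) = v" using sg[OF v] v by blast
    fix l assume "l \<in> ?T \<and> src l = v"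
    then obtain x where "x \<in> lc a - {a}" "l = sg x" "src l = v" by blast
    then show "l = sg v" using sg[of x] by simp
  qed
  moreover have "\<forall>l\<in>?T. src l \<in> lc a \<and> tgt l \<in> lc a" "?T \<subseteq> {..<r}" "\<forall>l\<in>?T. src l \<noteq> a"
    using sg tgt_in_lc by auto
  ultimately show ?thesis unfolding in_tree_def using reach by blast
qed

definition out_selector :: "nat \<Rightarrow> nat set \<Rightarrow> (nat \<Rightarrow> nat) \<Rightarrow> bool" where
  "out_selector a T sg \<longleftrightarrow> (\<forall>v\<in>lc a - {a}. sg v \<in> T \<and> src (sg v) = v \<and> tgt (sg v) \<in> lc a)"

lemma out_selector_exists:
  assumes edges: "\<forall>l\<in>T. src l \<in> lc a \<and> tgt l \<in> lc a" and out: "\<forall>v\<in>lc a - {a}. \<exists>l\<in>T. src l = v"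
    and l: "l \<in> T"
  obtains sg where "out_selector a T sg" "sg (src l) = l"
proof
  let ?sg = "(\<lambda>v. SOME l. l \<in> T \<and> src l = v)(src l := l)"
  have "?sg v \<in> T \<and> src (?sg v) = v" if "v \<in> lc a - {a}" for v
  proof (cases "v = src l")
    case False
    then have "\<exists>l'. l' \<in> T \<and> src l' = v" using out that by blast
    from someI_ex[OF this] show ?thesis using False by simp
  qed (use l in simp)
  then show "out_selector a T ?sg" unfolding out_selector_def using edges by blast
qed simp

lemma distinct_map_out_selector:
  assumes "out_selector a T sg" "distinct vs" "set vs \<subseteq> lc a - {a}"
  shows "distinct (map sg vs)"
  using assms unfolding out_selector_def distinct_map inj_on_def by (metis subsetD)

lemma out_selector_walk:
  assumes sg: "out_selector a T sg" and x: "x \<in> lc a" and before: "\<forall>s<t. ((\<lambda>v. tgt (sg v)) ^^ s) x \<noteq> a"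
  shows "((\<lambda>v. tgt (sg v)) ^^ t) x \<in> lc a \<and> (x, ((\<lambda>v. tgt (sg v)) ^^ t) x) \<in> (edge_rel T src tgt)\<^sup>*"
  using before
proof (induction t)
  case (Suc t)
  let ?v = "((\<lambda>v. tgt (sg v)) ^^ t) x"
  have "?v \<in> lc a - {a}" "(x, ?v) \<in> (edge_rel T src tgt)\<^sup>*" using Suc by auto
  moreover have "(?v, tgt (sg ?v)) \<in> edge_rel T src tgt"
    using sg \<open>?v \<in> lc a - {a}\<close> unfolding out_selector_def mem_edge_rel by metis
  ultimately show ?case using sg unfolding out_selector_def by auto
qed (use x in simp)

lemma out_selector_walk_hits_root:
  assumes sg: "out_selector a T sg" and T: "T \<subseteq> {..<r}" and acyclic: "\<not> has_cycle T src tgt"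
    and x: "x \<in> lc a"
  shows "\<exists>t. ((\<lambda>v. tgt (sg v)) ^^ t) x = a"
proof (rule ccontr)
  define X where "X t = ((\<lambda>v. tgt (sg v)) ^^ t) x" for t
  assume "\<nexists>t. ((\<lambda>v. tgt (sg v)) ^^ t) x = a"
  then have X: "X t \<in> lc a - {a}" for t
    using out_selector_walk[OF sg x] unfolding X_def by blast
  then have step: "sg (X t) \<in> T \<and> {src (sg (X t)), tgt (sg (X t))} = {X t, X (Suc t)}" for t
    using sg unfolding out_selector_def X_def by auto
  have "\<not> inj X"
    using X finite_lc finite_subset[of "range X" "lc a"] finite_imageD[of X UNIV] by auto
  then have ex: "\<exists>j. \<exists>i<j. X i = X j" unfolding inj_def by (metis linorder_neqE_nat)
  define j where "j = (LEAST j. \<exists>i<j. X i = X j)"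
  obtain i where i: "i < j" "X i = X j" using LeastI_ex[OF ex] unfolding j_def by blast
  have distinct: "distinct (map X [i..<j])"
  proof -
    have "\<not> (\<exists>s<t. X s = X t)" if "t < j" for t
      using not_less_Least[of t "\<lambda>j. \<exists>i<j. X i = X j"] that unfolding j_def by blast
    then have "inj_on X {i..<j}" unfolding inj_on_def by (metis atLeastLessThan_iff linorder_neqE_nat)
    then show ?thesis by (simp add: distinct_map)
  qed
  have "j \<noteq> Suc i"
    using step[of i] i T no_self_loop by force
  then have "length (map (sg \<circ> X) [i..<j]) \<ge> 2" using i by simp
  moreover have "uwalk T src tgt (map X [i..<j] @ [hd (map X [i..<j])]) (map (sg \<circ> X) [i..<j])"
    using uwalk_upt[of i j "sg \<circ> X" T src tgt X] step i by (simp add: upt_conv_Cons)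
  moreover have "distinct (map (sg \<circ> X) [i..<j])"
    using distinct_map_out_selector[OF sg distinct] X by auto
  ultimately show False
    using has_cycle_of_closed_uwalk distinct acyclic by blast
qed

lemma out_selector_path_to_root:
  assumes sg: "out_selector a T sg" and T: "T \<subseteq> {..<r}" and acyclic: "\<not> has_cycle T src tgt"
    and x: "x \<in> lc a"
  obtains A where "((\<lambda>v. tgt (sg v)) ^^ A) x = a" "inj_on (\<lambda>t. ((\<lambda>v. tgt (sg v)) ^^ t) x) {..A}"
    "\<And>t. t < A \<Longrightarrow> ((\<lambda>v. tgt (sg v)) ^^ t) x \<in> lc a - {a}" "(x, a) \<in> (edge_rel T src tgt)\<^sup>*"
proof -
  let ?X = "\<lambda>t. ((\<lambda>v. tgt (sg v)) ^^ t) x"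
  define A where "A = (LEAST t. ?X t = a)"
  have hit: "?X A = a"
    unfolding A_def using LeastI_ex[OF out_selector_walk_hits_root[OF assms]] .
  have first: "\<forall>t<A. ?X t \<noteq> a" unfolding A_def using not_less_Least by blast
  show ?thesis
  proof (rule that[OF hit inj_on_funpow_until_hit[OF hit first]])
    show "?X t \<in> lc a - {a}" if "t < A" for t
      using out_selector_walk[OF sg x, of t] first that by auto
    show "(x, a) \<in> (edge_rel T src tgt)\<^sup>*"
      using out_selector_walk[OF sg x, of A] first hit by auto
  qed
qed

lemma out_selector_paths_meet:
  assumes sg: "out_selector a T sg" and T: "T \<subseteq> {..<r}" and acyclic: "\<not> has_cycle T src tgt"
    and x: "x \<in> lc a" and x': "x' \<in> lc a"
    and X_def: "\<And>t. X t = ((\<lambda>v. tgt (sg v)) ^^ t) x" and Y_def: "\<And>t. Y t = ((\<lambda>v. tgt (sg v)) ^^ t) x'"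
  obtains p q where "X p = Y q"
    "uwalk T src tgt (map X [0..<p] @ [X p]) (map (sg \<circ> X) [0..<p])"
    "uwalk T src tgt (map Y [0..<q] @ [X p]) (map (sg \<circ> Y) [0..<q])"
    "distinct (map X [0..<p] @ X p # rev (map Y [0..<q]))"
    "set (map X [0..<p] @ rev (map Y [0..<q])) \<subseteq> lc a - {a}"
proof -
  obtain A where A: "X A = a" "inj_on X {..A}" "\<And>t. t < A \<Longrightarrow> X t \<in> lc a - {a}"
    using out_selector_path_to_root[OF sg T acyclic x] unfolding X_def by blast
  obtain B where B: "Y B = a" "inj_on Y {..B}" "\<And>t. t < B \<Longrightarrow> Y t \<in> lc a - {a}"
    using out_selector_path_to_root[OF sg T acyclic x'] unfolding Y_def by blast
  have stepX: "sg (X t) \<in> T \<and> {src (sg (X t)), tgt (sg (X t))} = {X t, X (Suc t)}" if "t < A" for t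
    using A(3)[OF that] sg unfolding out_selector_def X_def by auto
  have stepY: "sg (Y t) \<in> T \<and> {src (sg (Y t)), tgt (sg (Y t))} = {Y t, Y (Suc t)}" if "t < B" for t
    using B(3)[OF that] sg unfolding out_selector_def Y_def by auto
  have "X A \<in> Y ` {..B}" using A(1) B(1) by (metis atMost_iff image_eqI order_refl)
  then have meet: "\<exists>t. t \<le> A \<and> X t \<in> Y ` {..B}" by blast
  define p where "p = (LEAST t. t \<le> A \<and> X t \<in> Y ` {..B})"
  obtain q where pq: "p \<le> A" "q \<le> B" "X p = Y q" using LeastI_ex[OF meet] unfolding p_def by blast
  have apart: "X t \<notin> Y ` {..B}" if "t < p" for t
    using not_less_Least[of t "\<lambda>t. t \<le> A \<and> X t \<in> Y ` {..B}"] that pq(1) unfolding p_def by auto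
  show ?thesis
  proof (rule that[OF pq(3)])
    show "uwalk T src tgt (map X [0..<p] @ [X p]) (map (sg \<circ> X) [0..<p])"
      using uwalk_upt[of 0 p "sg \<circ> X" T src tgt X] stepX pq(1) by simp
    show "uwalk T src tgt (map Y [0..<q] @ [X p]) (map (sg \<circ> Y) [0..<q])"
      using uwalk_upt[of 0 q "sg \<circ> Y" T src tgt Y] stepY pq by simp
    have "set (map X [0..<p]) \<inter> set (map Y [0..<Suc q]) = {}"
      using apart pq(2) by fastforce
    then have "distinct (map X [0..<p] @ rev (map Y [0..<Suc q]))"
      using A(2) B(2) pq by (auto simp: distinct_map intro: inj_on_subset simp del: upt_Suc)
    moreover have "rev (map Y [0..<Suc q]) = X p # rev (map Y [0..<q])" using pq(3) by simp
    ultimately show "distinct (map X [0..<p] @ X p # rev (map Y [0..<q]))" by simp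
    have "X t \<in> lc a - {a}" if "t < p" for t using A(3) pq(1) that by simp
    moreover have "Y t \<in> lc a - {a}" if "t < q" for t using B(3) pq(2) that by simp
    ultimately show "set (map X [0..<p] @ rev (map Y [0..<q])) \<subseteq> lc a - {a}"
      by (simp add: image_subset_iff del: upt_Suc)
  qed
qed

text \<open>A second out-edge l of a vertex v closes a cycle: the walks along the selected edges from v
  and from the target of l both reach the root, and l joins their starting points.\<close>
lemma acyclic_out_selector_unique:
  assumes sg: "out_selector a T sg" and T: "T \<subseteq> {..<r}" and acyclic: "\<not> has_cycle T src tgt"
    and l: "l \<in> T" "src l \<in> lc a - {a}"
  shows "sg (src l) = l"
proof (rule ccontr)
  assume other: "sg (src l) \<noteq> l"
  define v w where "v = src l" and "w = tgt l"
  define X Y where "X t = ((\<lambda>v. tgt (sg v)) ^^ t) v" and "Y t = ((\<lambda>v. tgt (sg v)) ^^ t) w" for t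
  have lr: "l < r" using l T by auto
  then have "w \<in> lc a" using tgt_in_lc l unfolding w_def by blast
  then obtain p q where pq: "X p = Y q"
    and walk_X: "uwalk T src tgt (map X [0..<p] @ [X p]) (map (sg \<circ> X) [0..<p])"
    and walk_Y: "uwalk T src tgt (map Y [0..<q] @ [X p]) (map (sg \<circ> Y) [0..<q])"
    and dist_vs: "distinct (map X [0..<p] @ X p # rev (map Y [0..<q]))"
    and inner: "set (map X [0..<p] @ rev (map Y [0..<q])) \<subseteq> lc a - {a}"
    using out_selector_paths_meet[OF sg T acyclic _ \<open>w \<in> lc a\<close> X_def Y_def] l unfolding v_def
    by blast
  have "hd (map X [0..<p] @ [X p]) = v" by (cases p) (simp_all add: X_def upt_conv_Cons del: upt_Suc)
  moreover have "hd (map Y [0..<q] @ [X p]) = w"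
    using pq by (cases q) (simp_all add: Y_def upt_conv_Cons del: upt_Suc)
  ultimately have ends: "{src l, tgt l} = {hd (map Y [0..<q] @ [X p]), hd (map X [0..<p] @ [X p])}"
    unfolding v_def w_def by (simp add: insert_commute)
  have "distinct (map sg (map X [0..<p] @ rev (map Y [0..<q])))"
    using distinct_map_out_selector[OF sg _ inner] dist_vs by simp
  moreover have "l \<notin> sg ` set (map X [0..<p] @ rev (map Y [0..<q]))"
    using inner sg other unfolding out_selector_def v_def by fastforce
  ultimately have dist_es: "distinct (map (sg \<circ> X) [0..<p] @ rev (map (sg \<circ> Y) [0..<q]) @ [l])"
    by (auto simp: rev_map)
  have "p + q \<noteq> 0" using pq no_self_loop[OF lr] unfolding X_def Y_def v_def w_def by (cases p; cases q) auto
  then have "map (sg \<circ> X) [0..<p] @ map (sg \<circ> Y) [0..<q] \<noteq> []" by simp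
  then show False
    using has_cycle_of_two_paths[OF walk_X walk_Y l(1) ends dist_vs dist_es] acyclic by blast
qed

lemma in_tree_acyclic:
  assumes T: "in_tree a T" shows "\<not> has_cycle T src tgt"
proof
  assume "has_cycle T src tgt"
  then obtain es vs where len: "length es = length vs" "length es \<ge> 2"
    and dist: "distinct es" "distinct vs" and sub: "set es \<subseteq> T"
    and joins: "\<forall>i<length es. {src (es ! i), tgt (es ! i)} = {vs ! i, vs ! ((i + 1) mod length es)}"
    unfolding has_cycle_def by blast
  have ends: "src e \<in> set vs \<and> tgt e \<in> set vs" if "e \<in> set es" for e
  proof -
    obtain i where i: "i < length es" "e = es ! i" using \<open>e \<in> set es\<close> by (metis in_set_conv_nth)
    moreover have "0 < length es" using len by linarith
    ultimately have "(i + 1) mod length es < length vs" using len by simp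
    moreover have eq: "{src e, tgt e} = {vs ! i, vs ! ((i + 1) mod length es)}" using joins i by simp
    ultimately have "{src e, tgt e} \<subseteq> set vs" using i len by simp
    then show ?thesis by simp
  qed
  have "inj_on src (set es)" using in_tree_out_edge_unique[OF T] sub by (auto intro: inj_onI)
  then have "card (src ` set es) = card (set vs)" using len dist by (simp add: card_image distinct_card)
  then have src_onto: "src ` set es = set vs" using ends by (intro card_subset_eq) auto
  have closed: "y \<in> set vs" if x: "x \<in> set vs" and xy: "(x, y) \<in> edge_rel T src tgt" for x y
  proof -
    obtain e where e: "e \<in> set es" "src e = x" using x unfolding src_onto[symmetric] by blast
    obtain l where l: "l \<in> T" "src l = x" "tgt l = y" using xy unfolding mem_edge_rel by metis
    have "l = e" using in_tree_out_edge_unique[OF T l(1)] e sub l(2) by blast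
    then show ?thesis using ends e(1) l(3) by blast
  qed
  have "0 < length es" using len by linarith
  then have e0: "es ! 0 \<in> T" "{src (es ! 0), tgt (es ! 0)} = {vs ! 0, vs ! (1 mod length es)}"
    and v0: "vs ! 0 \<in> set vs"
    using len sub joins by (auto intro: nth_mem)
  have "vs ! 0 \<in> {src (es ! 0), tgt (es ! 0)}" using e0(2) by simp
  then have "vs ! 0 \<in> lc a" using in_treeD(3)[OF T e0(1)] by auto
  then have "(vs ! 0, a) \<in> (edge_rel T src tgt)\<^sup>*" by (rule in_treeD(6)[OF T])
  then have "a \<in> set vs"
  proof (induction rule: rtrancl_induct)
    case (step y z)
    then show ?case using closed by blast
  qed (fact v0)
  then show False using sub in_treeD(4)[OF T] unfolding src_onto[symmetric] by blast
qed

lemma spanning_tree_iff_in_tree: "spanning_tree r src tgt a T \<longleftrightarrow> in_tree a T"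
proof
  assume st: "spanning_tree r src tgt a T"
  have T: "T \<subseteq> {..<r}" and edges: "\<forall>l\<in>T. src l \<in> lc a \<and> tgt l \<in> lc a"
    and acyclic: "\<not> has_cycle T src tgt" and root: "\<forall>l\<in>T. src l \<noteq> a"
    using st by (simp_all add: spanning_tree_def)
  have out: "\<forall>v\<in>lc a - {a}. \<exists>l\<in>T. src l = v" using st by (simp add: spanning_tree_def)
  have unique: "l = l'" if "l \<in> T" "l' \<in> T" "src l = src l'" for l l'
  proof -
    obtain sg where sg: "out_selector a T sg" "sg (src l) = l"
      using out_selector_exists[OF edges out \<open>l \<in> T\<close>] .
    have "src l' \<in> lc a - {a}" using that edges root by auto
    then show ?thesis using acyclic_out_selector_unique[OF sg(1) T acyclic \<open>l' \<in> T\<close>] sg(2) that by simp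
  qed
  have ex1: "\<forall>v\<in>lc a - {a}. \<exists>!l. l \<in> T \<and> src l = v"
  proof
    fix v assume "v \<in> lc a - {a}"
    then obtain l where "l \<in> T" "src l = v" using out by blast
    then show "\<exists>!l. l \<in> T \<and> src l = v" using unique by (intro ex1I[of _ l]) auto
  qed
  have reach: "\<forall>v\<in>lc a. (v, a) \<in> (edge_rel T src tgt)\<^sup>*"
  proof
    fix v assume v: "v \<in> lc a"
    show "(v, a) \<in> (edge_rel T src tgt)\<^sup>*"
    proof (cases "v = a")
      case False
      then obtain l where "l \<in> T" "src l = v" using out v by blast
      with out_selector_exists[OF edges out this(1)] obtain sg where "out_selector a T sg" by blast
      from out_selector_path_to_root[OF this T acyclic v] show ?thesis by blast
    qed simp
  qed
  show "in_tree a T" unfolding in_tree_def by (intro conjI T edges root ex1 reach)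
next
  assume T: "in_tree a T"
  have "(a, v) \<in> (edge_rel T src tgt \<union> (edge_rel T src tgt)\<inverse>)\<^sup>*" if "v \<in> lc a" for v
  proof -
    have "(a, v) \<in> ((edge_rel T src tgt)\<inverse>)\<^sup>*"
      using in_treeD(6)[OF T that] by (rule rtrancl_converseI)
    then show ?thesis using rtrancl_mono[of "(edge_rel T src tgt)\<inverse>"] by blast
  qed
  moreover have "\<forall>v\<in>lc a. v \<noteq> a \<longrightarrow> (\<exists>l\<in>T. src l = v)" using in_treeD(5)[OF T] by blast
  ultimately show "spanning_tree r src tgt a T"
    unfolding spanning_tree_def using in_treeD(1,3,4)[OF T] in_tree_acyclic[OF T] by blast
qed

end

section \<open>Tree constants\<close>

lemma sum_insert_pairs:
  fixes u :: "'a \<Rightarrow> 'b::comm_semiring_1"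
  assumes "finite A" "\<And>p. p \<in> A \<Longrightarrow> fst p \<notin> snd p \<and> finite (snd p)"
    and "bij_betw (\<lambda>p. insert (fst p) (snd p)) A B"
  shows "(\<Sum>p\<in>A. u (fst p) * prod u (snd p)) = (\<Sum>S\<in>B. prod u S)"
proof -
  have "(\<Sum>p\<in>A. u (fst p) * prod u (snd p)) = (\<Sum>p\<in>A. prod u (insert (fst p) (snd p)))"
    using assms(2) by (intro sum.cong) simp_all
  also have "\<dots> = (\<Sum>S\<in>B. prod u S)" by (rule sum.reindex_bij_betw[OF assms(3)])
  finally show ?thesis .
qed

lemma rtrancl_avoiding_target:
  assumes "(x, y) \<in> R\<^sup>*"
  shows "(x, y) \<in> {(a, b). (a, b) \<in> R \<and> a \<noteq> y}\<^sup>*"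
  using assms
proof (induction rule: converse_rtrancl_induct)
  case (step a b)
  then show ?case by (cases "a = y") (auto intro: converse_rtrancl_into_rtrancl)
qed simp

lemma funpow_return_shortcut:
  fixes f :: "'a \<Rightarrow> 'a"
  assumes "(f ^^ Suc a) x = x" "a < b"
  shows "(f ^^ (b - Suc a)) x = (f ^^ b) x"
proof -
  have "(f ^^ (b - Suc a)) x = (f ^^ (b - Suc a)) ((f ^^ Suc a) x)" using assms(1) by simp
  also have "\<dots> = (f ^^ (b - Suc a + Suc a)) x" by (simp only: funpow_add o_apply)
  finally show ?thesis using assms(2) by simp
qed

definition flux_balanced ::
    "nat \<Rightarrow> (nat \<Rightarrow> nat) \<Rightarrow> (nat \<Rightarrow> nat) \<Rightarrow> (nat \<Rightarrow> real) \<Rightarrow> (nat \<Rightarrow> real) \<Rightarrow> nat \<Rightarrow> bool" where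
  "flux_balanced r src tgt u z j \<longleftrightarrow>
     (\<Sum>l\<in>{l. l < r \<and> src l = j}. u l) * z j = (\<Sum>l\<in>{l. l < r \<and> tgt l = j}. u l * z (src l))"

locale weakly_reversible_graph = reaction_graph +
  assumes weakly_rev: "weakly_reversible r src tgt"
begin

lemma reaches_in_lc:
  assumes "b \<in> lc a" shows "(b, a) \<in> (edge_rel {..<r} src tgt)\<^sup>*"
proof -
  let ?E = "edge_rel {..<r} src tgt"
  have "?E\<inverse> \<subseteq> ?E\<^sup>*" using weakly_rev unfolding weakly_reversible_def edge_rel_def by blast
  then have sym: "?E \<union> ?E\<inverse> \<subseteq> ?E\<^sup>*" by blast
  have "(b, a) \<in> (?E \<union> ?E\<inverse>)\<^sup>*" using lc_sym[OF assms] unfolding linkage_class_def by blast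
  then show ?thesis using rtrancl_subset_rtrancl[OF sym] by blast
qed

lemma in_tree_exists: "\<exists>T. in_tree a T"
proof -
  let ?E = "edge_rel {..<r} src tgt"
  define dist where "dist v = (LEAST n. (v, a) \<in> ?E ^^ n)" for v
  have dist: "(v, a) \<in> ?E ^^ dist v" if "v \<in> lc a" for v
  proof -
    have "\<exists>n. (v, a) \<in> ?E ^^ n" using reaches_in_lc[OF that] by (simp add: rtrancl_power)
    then show ?thesis unfolding dist_def by (rule LeastI_ex)
  qed
  have descend: "\<exists>l. l < r \<and> src l = v \<and> dist (tgt l) < dist v" if v: "v \<in> lc a - {a}" for v
  proof -
    have d: "(v, a) \<in> ?E ^^ dist v" using dist v by blast
    have "dist v \<noteq> 0" using d v by (metis relpow_0_E DiffE singletonI)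
    then obtain n where n: "dist v = Suc n" using not0_implies_Suc by blast
    then obtain y where y: "(v, y) \<in> ?E" "(y, a) \<in> ?E ^^ n" using d by (metis relpow_Suc_D2)
    obtain l where l: "l < r" "src l = v" "tgt l = y" using y(1) unfolding edge_rel_def by auto
    have "dist y \<le> n" unfolding dist_def using y(2) by (rule Least_le)
    then show ?thesis using l n by (intro exI[of _ l]) auto
  qed
  define sg where "sg v = (SOME l. l < r \<and> src l = v \<and> dist (tgt l) < dist v)" for v
  have "sg v < r \<and> src (sg v) = v \<and> dist (tgt (sg v)) < dist v" if "v \<in> lc a - {a}" for v
    unfolding sg_def using someI_ex[OF descend[OF that]] .
  then show ?thesis using in_tree_of_descending_selector by blast
qed

lemma finite_in_trees: "finite {T. in_tree a T}"
  by (rule finite_subset[of _ "Pow {..<r}"]) (auto simp: in_tree_def)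

lemma tree_const_in_trees: "tree_const r src tgt u a = (\<Sum>T\<in>{T. in_tree a T}. prod u T)"
  unfolding tree_const_def spanning_tree_iff_in_tree ..

lemma tree_const_pos:
  assumes "\<And>l. l < r \<Longrightarrow> u l > 0"
  shows "tree_const r src tgt u a > 0"
proof -
  obtain T where "in_tree a T" using in_tree_exists by blast
  moreover have "prod u T' > 0" if "in_tree a T'" for T'
    using assms in_treeD(1)[OF that] by (auto intro!: prod_pos)
  ultimately show ?thesis unfolding tree_const_in_trees
    by (intro sum_pos2[OF finite_in_trees]) (auto intro: less_imp_le)
qed

lemma edge_rel_rtrancl_remove_out_edge:
  assumes "(x, y) \<in> (edge_rel S src tgt)\<^sup>*" "src l = y"
  shows "(x, y) \<in> (edge_rel (S - {l}) src tgt)\<^sup>*"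
proof -
  have "{(a, b). (a, b) \<in> edge_rel S src tgt \<and> a \<noteq> y} \<subseteq> edge_rel (S - {l}) src tgt"
    using assms(2) unfolding edge_rel_def by auto
  then show ?thesis using rtrancl_mono rtrancl_avoiding_target[OF assms(1)] by blast
qed

text \<open>Functional graphs on the linkage class of j whose unique cycle passes through j.\<close>
definition unicycle :: "nat \<Rightarrow> nat set \<Rightarrow> bool" where
  "unicycle j S \<longleftrightarrow> S \<subseteq> {..<r} \<and> (\<forall>l\<in>S. src l \<in> lc j \<and> tgt l \<in> lc j) \<and>
     (\<forall>v\<in>lc j. \<exists>!l. l \<in> S \<and> src l = v) \<and> (\<forall>v\<in>lc j. (v, j) \<in> (edge_rel S src tgt)\<^sup>*)"

lemma unicycleD:
  assumes "unicycle j S"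
  shows "S \<subseteq> {..<r}" "\<And>l. l \<in> S \<Longrightarrow> src l \<in> lc j \<and> tgt l \<in> lc j"
    "\<And>v. v \<in> lc j \<Longrightarrow> \<exists>!l. l \<in> S \<and> src l = v" "\<And>v. v \<in> lc j \<Longrightarrow> (v, j) \<in> (edge_rel S src tgt)\<^sup>*"
  using assms unfolding unicycle_def by blast+

lemma unicycle_out_edge_unique:
  assumes S: "unicycle j S" and "l \<in> S" "l' \<in> S" "src l = src l'"
  shows "l = l'"
proof -
  have "\<exists>!l''. l'' \<in> S \<and> src l'' = src l" using unicycleD(2,3)[OF S] assms(2) by blast
  then show ?thesis using assms(2-4) by auto
qed

lemma unicycle_insert:
  assumes T: "in_tree (src l) T" and l: "l < r" "j \<in> {src l, tgt l}"
  shows "unicycle j (insert l T)"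
proof -
  let ?S = "insert l T" and ?C = "lc (src l)"
  have l_in: "src l \<in> ?C" "tgt l \<in> ?C" using tgt_in_lc[OF l(1) lc_refl] lc_refl by blast+
  then have lc_j: "lc j = ?C" using l(2) lc_eq by blast
  have edges: "\<forall>l'\<in>?S. src l' \<in> ?C \<and> tgt l' \<in> ?C" using in_treeD(3)[OF T] l_in by blast
  have out: "\<exists>!l'. l' \<in> ?S \<and> src l' = v" if "v \<in> ?C" for v
  proof (cases "v = src l")
    case True
    show ?thesis
    proof (rule ex1I[of _ l])
      fix l' assume "l' \<in> ?S \<and> src l' = v"
      then show "l' = l" using in_treeD(4)[OF T] True by blast
    qed (simp add: True)
  next
    case False
    then have "(\<lambda>l'. l' \<in> ?S \<and> src l' = v) = (\<lambda>l'. l' \<in> T \<and> src l' = v)" by auto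
    then show ?thesis using in_treeD(5)[OF T] that False by simp
  qed
  have "(src l, tgt l) \<in> edge_rel ?S src tgt" unfolding mem_edge_rel by blast
  then have "(src l, j) \<in> (edge_rel ?S src tgt)\<^sup>*" using l(2) by auto
  moreover have "(v, src l) \<in> (edge_rel ?S src tgt)\<^sup>*" if "v \<in> ?C" for v
    using in_treeD(6)[OF T that] edge_rel_rtrancl_mono[of T ?S] by blast
  ultimately have "\<forall>v\<in>?C. (v, j) \<in> (edge_rel ?S src tgt)\<^sup>*" using rtrancl_trans by metis
  then show ?thesis unfolding unicycle_def lc_j using in_treeD(1)[OF T] l(1) edges out by blast
qed

lemma unicycle_remove:
  assumes S: "unicycle j S" and w: "w \<in> lc j" and l: "l \<in> S" "src l = w"
    and reach: "\<forall>v\<in>lc j. (v, w) \<in> (edge_rel S src tgt)\<^sup>*"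
  shows "in_tree w (S - {l})"
proof -
  have lc_w: "lc w = lc j" using lc_eq[OF w] .
  have only_l: "l' = l" if "l' \<in> S" "src l' = w" for l'
    using unicycle_out_edge_unique[OF S l(1) that(1)] l(2) that(2) by simp
  have "\<exists>!l'. l' \<in> S - {l} \<and> src l' = v" if "v \<in> lc w - {w}" for v
  proof -
    have "\<exists>!l'. l' \<in> S \<and> src l' = v" using unicycleD(3)[OF S] that unfolding lc_w by blast
    then show ?thesis using that l(2) by auto
  qed
  moreover have "(v, w) \<in> (edge_rel (S - {l}) src tgt)\<^sup>*" if "v \<in> lc w" for v
    using edge_rel_rtrancl_remove_out_edge reach l(2) that unfolding lc_w by blast
  moreover have "\<forall>l'\<in>S - {l}. src l' \<noteq> w" using only_l by blast
  ultimately show ?thesis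
    unfolding in_tree_def using unicycleD(1,2)[OF S] unfolding lc_w by blast
qed

lemma bij_out_edge_in_tree_unicycle:
  "bij_betw (\<lambda>p. insert (fst p) (snd p)) ({l. l < r \<and> src l = j} \<times> {T. in_tree j T}) {S. unicycle j S}"
proof (rule bij_betwI')
  fix p q assume p: "p \<in> {l. l < r \<and> src l = j} \<times> {T. in_tree j T}"
    and q: "q \<in> {l. l < r \<and> src l = j} \<times> {T. in_tree j T}"
  show "(insert (fst p) (snd p) = insert (fst q) (snd q)) = (p = q)"
  proof
    assume eq: "insert (fst p) (snd p) = insert (fst q) (snd q)"
    have notin: "fst p \<notin> snd q" "fst p \<notin> snd p" "fst q \<notin> snd q"
      using p q in_treeD(4) by fastforce+
    then have fst: "fst p = fst q" using eq by blast
    then have "snd p = snd q" using eq notin by (metis insert_ident)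
    then show "p = q" using fst by (simp add: prod_eq_iff)
  qed simp
next
  fix p assume "p \<in> {l. l < r \<and> src l = j} \<times> {T. in_tree j T}"
  then show "insert (fst p) (snd p) \<in> {S. unicycle j S}"
    using unicycle_insert[of "fst p" "snd p" j] by auto
next
  fix S assume "S \<in> {S. unicycle j S}"
  then have S: "unicycle j S" by simp
  obtain l where l: "l \<in> S" "src l = j" using unicycleD(3)[OF S lc_refl] by blast
  have "in_tree j (S - {l})" using unicycle_remove[OF S lc_refl l] unicycleD(4)[OF S] by blast
  moreover have "l < r" using unicycleD(1)[OF S] l(1) by auto
  ultimately have "(l, S - {l}) \<in> {l. l < r \<and> src l = j} \<times> {T. in_tree j T}" using l(2) by simp
  moreover have "S = insert (fst (l, S - {l})) (snd (l, S - {l}))" using l(1) by auto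
  ultimately show "\<exists>p\<in>{l. l < r \<and> src l = j} \<times> {T. in_tree j T}. S = insert (fst p) (snd p)" by blast
qed

lemma out_flux_tree_const:
  "(\<Sum>l\<in>{l. l < r \<and> src l = j}. u l) * tree_const r src tgt u j = (\<Sum>S\<in>{S. unicycle j S}. prod u S)"
proof -
  let ?A = "{l. l < r \<and> src l = j} \<times> {T. in_tree j T}"
  have "(\<Sum>l\<in>{l. l < r \<and> src l = j}. u l) * tree_const r src tgt u j = (\<Sum>p\<in>?A. u (fst p) * prod u (snd p))"
    unfolding tree_const_in_trees sum_product sum.cartesian_product by (simp add: split_def)
  also have "\<dots> = (\<Sum>S\<in>{S. unicycle j S}. prod u S)"
  proof (rule sum_insert_pairs[OF _ _ bij_out_edge_in_tree_unicycle])
    show "finite ?A" using finite_in_trees by simp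
    show "fst p \<notin> snd p \<and> finite (snd p)" if "p \<in> ?A" for p
      using that in_treeD(2,4) by fastforce
  qed
  finally show ?thesis .
qed

definition succ :: "nat set \<Rightarrow> nat \<Rightarrow> nat" where
  "succ S v = tgt (THE l. l \<in> S \<and> src l = v)"

lemma succ_eq:
  assumes S: "unicycle j S" and l: "l \<in> S" shows "succ S (src l) = tgt l"
proof -
  have "\<exists>!l'. l' \<in> S \<and> src l' = src l" using unicycleD(2,3)[OF S] l by blast
  then have "(THE l'. l' \<in> S \<and> src l' = src l) = l" using l by (intro the1_equality) simp_all
  then show ?thesis unfolding succ_def by simp
qed

lemma unicycle_out_edge:
  assumes S: "unicycle j S" and v: "v \<in> lc j"
  obtains l where "l \<in> S" "src l = v" "succ S v = tgt l"
  using unicycleD(3)[OF S v] succ_eq[OF S] by blast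

lemma succ_iterate_path:
  assumes S: "unicycle j S" and x: "x \<in> lc j"
  shows "(succ S ^^ t) x \<in> lc j \<and> (x, (succ S ^^ t) x) \<in> (edge_rel S src tgt)\<^sup>*"
proof (induction t)
  case (Suc t)
  let ?v = "(succ S ^^ t) x"
  obtain l where l: "l \<in> S" "src l = ?v" "succ S ?v = tgt l" using unicycle_out_edge[OF S] Suc by blast
  then have "(?v, succ S ?v) \<in> edge_rel S src tgt" unfolding mem_edge_rel by metis
  moreover have "succ S ?v \<in> lc j" using unicycleD(2)[OF S l(1)] l(3) by simp
  ultimately show ?case using Suc rtrancl_into_rtrancl[of x ?v] by simp
qed (simp add: x)

lemma succ_iterate_reaches:
  assumes S: "unicycle j S" and xy: "(x, y) \<in> (edge_rel S src tgt)\<^sup>*"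
  shows "\<exists>t. (succ S ^^ t) x = y"
  using xy
proof (induction rule: rtrancl_induct)
  case base
  show ?case by (rule exI[of _ 0]) simp
next
  case (step y z)
  then obtain t l where "(succ S ^^ t) x = y" "l \<in> S" "y = src l" "z = tgt l"
    unfolding mem_edge_rel by blast
  then have "(succ S ^^ Suc t) x = z" using succ_eq[OF S] by simp
  then show ?case by blast
qed

text \<open>Both edges close the cycle through j: following the out-edges from j one meets the source
  of the first one and returns to j before reaching the source of the other.\<close>
lemma return_edge_unique:
  assumes S: "unicycle j S"
    and l1: "l1 \<in> S" "tgt l1 = j" "(j, src l1) \<in> (edge_rel S src tgt)\<^sup>*"
    and l2: "l2 \<in> S" "tgt l2 = j" "(j, src l2) \<in> (edge_rel S src tgt)\<^sup>*"
  shows "l1 = l2"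
proof -
  let ?g = "succ S"
  have first_hit: "\<exists>n. (?g ^^ n) j = src l \<and> (?g ^^ Suc n) j = j \<and> (\<forall>t<n. (?g ^^ t) j \<noteq> src l)"
    if "l \<in> S" "tgt l = j" "(j, src l) \<in> (edge_rel S src tgt)\<^sup>*" for l
  proof -
    define n where "n = (LEAST n. (?g ^^ n) j = src l)"
    have "(?g ^^ n) j = src l"
      unfolding n_def using LeastI_ex[OF succ_iterate_reaches[OF S that(3)]] .
    moreover have "\<forall>t<n. (?g ^^ t) j \<noteq> src l" unfolding n_def using not_less_Least by blast
    ultimately show ?thesis using succ_eq[OF S that(1)] that(2) by auto
  qed
  obtain n1 where n1: "(?g ^^ n1) j = src l1" "(?g ^^ Suc n1) j = j" "\<forall>t<n1. (?g ^^ t) j \<noteq> src l1"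
    using first_hit[OF l1] by blast
  obtain n2 where n2: "(?g ^^ n2) j = src l2" "(?g ^^ Suc n2) j = j" "\<forall>t<n2. (?g ^^ t) j \<noteq> src l2"
    using first_hit[OF l2] by blast
  have "\<not> n1 < n2" using funpow_return_shortcut[OF n1(2), of n2] n2(1,3) by auto
  moreover have "\<not> n2 < n1" using funpow_return_shortcut[OF n2(2), of n1] n1(1,3) by auto
  ultimately have "src l1 = src l2" using n1(1) n2(1) by simp
  then show ?thesis using unicycle_out_edge_unique[OF S l1(1) l2(1)] by simp
qed

lemma unicycle_return_edge:
  assumes S: "unicycle j S"
  obtains l where "l \<in> S" "tgt l = j" "in_tree (src l) (S - {l})"
proof -
  let ?g = "succ S"
  obtain l0 where l0: "l0 \<in> S" "src l0 = j" "?g j = tgt l0" using unicycle_out_edge[OF S lc_refl] .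
  have "?g j \<in> lc j" using unicycleD(2)[OF S l0(1)] l0(3) by simp
  then obtain t where t: "(?g ^^ t) (?g j) = j"
    using succ_iterate_reaches[OF S unicycleD(4)[OF S]] by blast
  define w where "w = (?g ^^ t) j"
  have w: "w \<in> lc j" "(j, w) \<in> (edge_rel S src tgt)\<^sup>*"
    using succ_iterate_path[OF S lc_refl] unfolding w_def by blast+
  obtain l where l: "l \<in> S" "src l = w" "?g w = tgt l" using unicycle_out_edge[OF S w(1)] .
  have "?g w = j" using t unfolding w_def by (simp add: funpow_swap1)
  moreover have "\<forall>v\<in>lc j. (v, w) \<in> (edge_rel S src tgt)\<^sup>*"
    using unicycleD(4)[OF S] w(2) by (meson rtrancl_trans)
  ultimately show ?thesis using that[of l] unicycle_remove[OF S w(1) l(1,2)] l by simp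
qed

lemma bij_in_edge_in_tree_unicycle:
  "bij_betw (\<lambda>p. insert (fst p) (snd p))
     (SIGMA l:{l. l < r \<and> tgt l = j}. {T. in_tree (src l) T}) {S. unicycle j S}"
proof (rule bij_betwI')
  let ?A = "SIGMA l:{l. l < r \<and> tgt l = j}. {T. in_tree (src l) T}"
  have memA: "p \<in> ?A \<longleftrightarrow> fst p < r \<and> tgt (fst p) = j \<and> in_tree (src (fst p)) (snd p)" for p
    by (cases p) simp
  have reach: "(j, src (fst p)) \<in> (edge_rel (insert (fst p) (snd p)) src tgt)\<^sup>*" if "p \<in> ?A" for p
  proof -
    have "j \<in> lc (src (fst p))" using that tgt_in_lc[OF _ lc_refl] unfolding memA by metis
    then have "(j, src (fst p)) \<in> (edge_rel (snd p) src tgt)\<^sup>*" using that in_treeD(6) unfolding memA by blast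
    then show ?thesis using edge_rel_rtrancl_mono[of "snd p" "insert (fst p) (snd p)"] by blast
  qed
  have notin: "fst p \<notin> snd p" if "p \<in> ?A" for p
    using that in_treeD(4) unfolding memA by blast
  fix p q assume p: "p \<in> ?A" and q: "q \<in> ?A"
  show "(insert (fst p) (snd p) = insert (fst q) (snd q)) = (p = q)"
  proof
    assume eq: "insert (fst p) (snd p) = insert (fst q) (snd q)"
    have S: "unicycle j (insert (fst p) (snd p))" using p unicycle_insert[of "fst p" "snd p" j] memA by simp
    have "fst q \<in> insert (fst p) (snd p)" unfolding eq by simp
    moreover have "(j, src (fst q)) \<in> (edge_rel (insert (fst p) (snd p)) src tgt)\<^sup>*"
      unfolding eq by (rule reach[OF q])
    ultimately have fst: "fst p = fst q"
      using return_edge_unique[OF S insertI1 _ reach[OF p]] p q unfolding memA by blast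
    then have "snd p = snd q" using eq notin[OF p] notin[OF q] by (metis insert_ident)
    then show "p = q" using fst by (simp add: prod_eq_iff)
  qed simp
next
  fix p assume "p \<in> (SIGMA l:{l. l < r \<and> tgt l = j}. {T. in_tree (src l) T})"
  then show "insert (fst p) (snd p) \<in> {S. unicycle j S}"
    using unicycle_insert[of "fst p" "snd p" j] by (cases p) simp
next
  fix S assume "S \<in> {S. unicycle j S}"
  then have S: "unicycle j S" by simp
  obtain l where l: "l \<in> S" "tgt l = j" "in_tree (src l) (S - {l})" using unicycle_return_edge[OF S] .
  then have "(l, S - {l}) \<in> (SIGMA l:{l. l < r \<and> tgt l = j}. {T. in_tree (src l) T})"
    using unicycleD(1)[OF S] by auto
  moreover have "S = insert (fst (l, S - {l})) (snd (l, S - {l}))" using l(1) by auto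
  ultimately show "\<exists>p\<in>(SIGMA l:{l. l < r \<and> tgt l = j}. {T. in_tree (src l) T}). S = insert (fst p) (snd p)"
    by blast
qed

lemma in_flux_tree_const:
  "(\<Sum>l\<in>{l. l < r \<and> tgt l = j}. u l * tree_const r src tgt u (src l)) = (\<Sum>S\<in>{S. unicycle j S}. prod u S)"
proof -
  let ?A = "SIGMA l:{l. l < r \<and> tgt l = j}. {T. in_tree (src l) T}"
  have "(\<Sum>l\<in>{l. l < r \<and> tgt l = j}. u l * tree_const r src tgt u (src l))
      = (\<Sum>l\<in>{l. l < r \<and> tgt l = j}. \<Sum>T\<in>{T. in_tree (src l) T}. u l * prod u T)"
    unfolding tree_const_in_trees by (simp add: sum_distrib_left)
  also have "\<dots> = (\<Sum>p\<in>?A. u (fst p) * prod u (snd p))"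
    by (subst sum.Sigma) (simp_all add: finite_in_trees split_def)
  also have "\<dots> = (\<Sum>S\<in>{S. unicycle j S}. prod u S)"
  proof (rule sum_insert_pairs[OF _ _ bij_in_edge_in_tree_unicycle])
    show "finite ?A" using finite_in_trees by simp
    show "fst p \<notin> snd p \<and> finite (snd p)" if "p \<in> ?A" for p
      using that in_treeD(2,4) by fastforce
  qed
  finally show ?thesis .
qed

text \<open>Kirchhoff's matrix-tree theorem: both fluxes equal the total weight of the unicycles through j.\<close>
lemma tree_const_flux_balanced: "flux_balanced r src tgt u (tree_const r src tgt u) j"
  unfolding flux_balanced_def out_flux_tree_const in_flux_tree_const ..

lemma flux_balanced_zero_propagates:
  assumes u: "\<And>l. l < r \<Longrightarrow> u l > 0" and nonneg: "\<forall>v\<in>lc a. w v \<ge> 0"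
    and bal: "\<forall>j\<in>lc a. flux_balanced r src tgt u w j" and y: "y \<in> lc a" "w y = 0"
    and l: "l < r" "tgt l = y"
  shows "w (src l) = 0"
proof -
  let ?In = "{l. l < r \<and> tgt l = y}"
  have "flux_balanced r src tgt u w y" using bal y(1) by blast
  then have sum0: "(\<Sum>l'\<in>?In. u l' * w (src l')) = 0" using y(2) unfolding flux_balanced_def by simp
  have nonneg_terms: "0 \<le> u l' * w (src l')" if "l' \<in> ?In" for l'
  proof -
    have "0 \<le> w (src l')" using nonneg src_in_lc that y(1) by simp
    moreover have "0 \<le> u l'" using u that by (simp add: less_imp_le)
    ultimately show ?thesis by simp
  qed
  have "\<forall>l'\<in>?In. u l' * w (src l') = 0"
    using sum_nonneg_eq_0_iff[of ?In, OF _ nonneg_terms] sum0 by simp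
  then have "u l * w (src l) = 0" using l by blast
  then show ?thesis using u[OF l(1)] by simp
qed

lemma flux_balanced_vanishes:
  assumes u: "\<And>l. l < r \<Longrightarrow> u l > 0" and nonneg: "\<forall>v\<in>lc a. w v \<ge> 0"
    and bal: "\<forall>j\<in>lc a. flux_balanced r src tgt u w j" and v0: "v0 \<in> lc a" "w v0 = 0"
    and v: "v \<in> lc a"
  shows "w v = 0"
proof -
  have "v \<in> lc v0" using v lc_eq[OF v0(1)] by simp
  then have "(v, v0) \<in> (edge_rel {..<r} src tgt)\<^sup>*" by (rule reaches_in_lc)
  then have "v \<in> lc a \<and> w v = 0"
  proof (induction rule: converse_rtrancl_induct)
    case (step x y)
    then obtain l where "l < r" "x = src l" "y = tgt l" unfolding mem_edge_rel by auto
    then show ?case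
      using flux_balanced_zero_propagates[OF u nonneg bal] src_in_lc step.IH by auto
  qed (use v0 in simp)
  then show ?thesis ..
qed

text \<open>Subtract from z the largest multiple of the tree constants that keeps it nonnegative; the
  difference is balanced and vanishes somewhere, hence everywhere.\<close>
lemma flux_balanced_proportional_tree_const:
  assumes u: "\<And>l. l < r \<Longrightarrow> u l > 0" and z: "\<forall>v\<in>lc a. z v > 0"
    and bal: "\<forall>j\<in>lc a. flux_balanced r src tgt u z j" and b: "b \<in> lc a"
  shows "z a / z b = tree_const r src tgt u a / tree_const r src tgt u b"
proof -
  define K where "K = tree_const r src tgt u"
  have K: "K v > 0" for v unfolding K_def using tree_const_pos u by blast
  define t where "t = Min ((\<lambda>v. z v / K v) ` lc a)"
  have "t \<in> (\<lambda>v. z v / K v) ` lc a" unfolding t_def using finite_lc lc_refl by (intro Min_in) auto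
  then obtain v0 where v0: "v0 \<in> lc a" "z v0 / K v0 = t" by blast
  define w where "w v = z v - t * K v" for v
  have nonneg: "w v \<ge> 0" if "v \<in> lc a" for v
  proof -
    have "t \<le> z v / K v" unfolding t_def using finite_lc that by (intro Min_le) auto
    then show ?thesis unfolding w_def using K[of v] by (simp add: le_divide_eq)
  qed
  have bal_w: "flux_balanced r src tgt u w j" if "j \<in> lc a" for j
  proof -
    let ?out = "\<Sum>l\<in>{l. l < r \<and> src l = j}. u l"
    have "flux_balanced r src tgt u z j" "flux_balanced r src tgt u K j"
      using bal that tree_const_flux_balanced unfolding K_def by blast+
    have "?out * w j = ?out * z j - t * (?out * K j)" unfolding w_def by (simp add: algebra_simps)
    also have "\<dots> = (\<Sum>l\<in>{l. l < r \<and> tgt l = j}. u l * z (src l))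
        - t * (\<Sum>l\<in>{l. l < r \<and> tgt l = j}. u l * K (src l))"
      using \<open>flux_balanced r src tgt u z j\<close> \<open>flux_balanced r src tgt u K j\<close> unfolding flux_balanced_def by simp
    also have "\<dots> = (\<Sum>l\<in>{l. l < r \<and> tgt l = j}. u l * w (src l))"
      unfolding w_def by (simp add: algebra_simps sum_subtractf sum_distrib_left)
    finally show ?thesis unfolding flux_balanced_def .
  qed
  have "w v0 = 0" unfolding w_def using v0(2) K[of v0] by (simp add: field_simps)
  then have "w v = 0" if "v \<in> lc a" for v
    using flux_balanced_vanishes[of u a w v0 v] u nonneg bal_w v0(1) that by blast
  then have zK: "z v = t * K v" if "v \<in> lc a" for v using that unfolding w_def by simp
  then have "t \<noteq> 0" using z lc_refl by force
  then show ?thesis using zK[OF lc_refl] zK[OF b] unfolding K_def[symmetric] by simp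
qed

end

section \<open>Deficiency zero and monomials\<close>

lemma sum_fun_apply: "(\<Sum>j\<in>A. f j) s = (\<Sum>j\<in>A. (f j s :: real))"
  by (induction A rule: infinite_finite_induct) auto

lemma (in vector_space) dim_zero_in_finite_span:
  assumes "dim W = 0" "W \<subseteq> span G" "finite G"
  shows "W \<subseteq> {0}"
proof -
  obtain B where B: "B \<subseteq> W" "independent B" "W \<subseteq> span B" "card B = dim W"
    by (rule basis_exists)
  then have "finite B" using assms(2,3) independent_span_bound[of G B] span_base by blast
  then have "B = {}" using B(4) assms(1) by simp
  then show ?thesis using B(3) by simp
qed

lemma incidence_col_sum:
  fixes t :: "nat \<Rightarrow> real"
  assumes "trho l < nt" "trho' l < nt"
  shows "(\<Sum>j<nt. incidence_col trho trho' l j * t j) = t (trho' l) - t (trho l)"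
proof -
  have "incidence_col trho trho' l j * t j = (if j = trho' l then t j else 0) - (if j = trho l then t j else 0)"
    for j unfolding incidence_col_def by simp
  then have "(\<Sum>j<nt. incidence_col trho trho' l j * t j) =
      (\<Sum>j<nt. if j = trho' l then t j else 0) - (\<Sum>j<nt. if j = trho l then t j else 0)"
    by (simp add: sum_subtractf)
  also have "\<dots> = t (trho' l) - t (trho l)" using assms by (simp add: sum.delta')
  finally show ?thesis .
qed

lemma deficiency_zero_incidence_combination:
  fixes psi :: "nat \<Rightarrow> real"
  assumes range: "\<forall>l<r. trho l < nt \<and> trho' l < nt"
    and d0: "struct_deficiency m nt r ty trho trho' = 0"
    and cancel: "\<forall>s<m. (\<Sum>l<r. psi l * (real (ty (trho' l) s) - real (ty (trho l) s))) = 0"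
  shows "(\<Sum>l<r. psi l * incidence_col trho trho' l j) = 0"
proof -
  interpret vs: vector_space fscale by (rule vector_space_fscale)
  define G where "G = incidence_col trho trho' ` {..<r}"
  define V where "V = (\<Sum>l<r. fscale (psi l) (incidence_col trho trho' l))"
  have V: "V j = (\<Sum>l<r. psi l * incidence_col trho trho' l j)" for j
    unfolding V_def sum_fun_apply fscale_def by simp
  have "V \<in> fspan G" unfolding V_def G_def by (intro vs.span_sum vs.span_scale vs.span_base) auto
  moreover have "V \<in> kerY m nt ty" unfolding kerY_def
  proof (intro CollectI conjI allI impI)
    fix j assume "nt \<le> j"
    then show "V j = 0" using range unfolding V incidence_col_def by (intro sum.neutral) auto
  next
    fix s assume "s < m"
    have "(\<Sum>j<nt. V j * real (ty j s)) = (\<Sum>l<r. psi l * (\<Sum>j<nt. incidence_col trho trho' l j * real (ty j s)))"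
      unfolding V by (simp add: sum_distrib_left sum_distrib_right mult.assoc sum.swap[of _ "{..<nt}"])
    also have "\<dots> = (\<Sum>l<r. psi l * (real (ty (trho' l) s) - real (ty (trho l) s)))"
      using range by (intro sum.cong) (simp_all add: incidence_col_sum)
    finally show "(\<Sum>j<nt. V j * real (ty j s)) = 0" using cancel \<open>s < m\<close> by simp
  qed
  moreover have "kerY m nt ty \<inter> fspan G \<subseteq> {0}"
    using d0 vs.dim_zero_in_finite_span[of _ G] unfolding struct_deficiency_def G_def by simp
  ultimately have "V = 0" by blast
  then show ?thesis using V[of j] by simp
qed

text \<open>The monomial x^v for a real exponent vector v, through logarithms (meaningful for positive x).\<close>
definition rpow_monom :: "nat \<Rightarrow> (nat \<Rightarrow> real) \<Rightarrow> (nat \<Rightarrow> real) \<Rightarrow> real" where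
  "rpow_monom m x v = exp (\<Sum>s<m. v s * ln (x s))"

lemma monom_eq_rpow_monom:
  assumes "\<forall>s<m. x s > 0"
  shows "monom m x v = rpow_monom m x (cvec m v)"
proof -
  have "rpow_monom m x (cvec m v) = (\<Prod>s<m. exp (real (v s) * ln (x s)))"
    unfolding rpow_monom_def cvec_def by (simp add: exp_sum)
  also have "\<dots> = (\<Prod>s<m. x s ^ v s)" using assms by (intro prod.cong) (simp_all add: exp_of_nat_mult)
  finally show ?thesis unfolding monom_def by simp
qed

lemma monom_pos: "\<forall>s<m. x s > 0 \<Longrightarrow> monom m x v > 0"
  unfolding monom_def by (auto intro!: prod_pos)

lemma rpow_monom_pos: "rpow_monom m x v > 0"
  unfolding rpow_monom_def by simp

lemma rpow_monom_zero: "rpow_monom m x 0 = 1"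
  unfolding rpow_monom_def by simp

lemma rpow_monom_add: "rpow_monom m x (v + w) = rpow_monom m x v * rpow_monom m x w"
  unfolding rpow_monom_def by (simp add: distrib_right sum.distrib exp_add)

lemma rpow_monom_diff: "rpow_monom m x (v - w) = rpow_monom m x v / rpow_monom m x w"
  unfolding rpow_monom_def by (simp add: left_diff_distrib sum_subtractf exp_diff)

lemma rpow_monom_fscale: "rpow_monom m x (fscale a v) = rpow_monom m x v powr a"
  unfolding rpow_monom_def fscale_def powr_def by (simp add: sum_distrib_left mult.assoc)

lemma rpow_monom_sum: "finite A \<Longrightarrow> rpow_monom m x (\<Sum>j\<in>A. f j) = (\<Prod>j\<in>A. rpow_monom m x (f j))"
proof (induction A rule: finite_induct)
  case (insert a A)
  have "sum f (insert a A) = f a + sum f A" by (rule sum.insert[OF insert(1,2)])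
  then show ?case using insert by (simp only: rpow_monom_add prod.insert[OF insert(1,2)])
qed (simp only: sum.empty prod.empty rpow_monom_zero)

lemma sum_if_lessThan:
  "(\<Sum>l<(r::nat). if P l then f l else (0::real)) = (\<Sum>l\<in>{l. l < r \<and> P l}. f l)"
proof -
  have "{l. l < r \<and> P l} = {l \<in> {..<r}. P l}" by auto
  then show ?thesis using sum.inter_filter[of "{..<r}" f P] by simp
qed

lemma gmas_rhs_cong:
  "\<forall>l<r. u l = u' l \<Longrightarrow> gmas_rhs m r y ty trho trho' kap u x s = gmas_rhs m r y ty trho trho' kap u' x s"
  unfolding gmas_rhs_def by (intro sum.cong) auto

section \<open>The improperly translated mass-action system\<close>

locale translated_network =
  fixes m n r nt sd :: nat
    and y ty :: "nat \<Rightarrow> nat \<Rightarrow> nat"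
    and rho rho' trho trho' h1 h2 kap p q :: "nat \<Rightarrow> nat"
    and CRK :: "nat set"
    and k :: "nat \<Rightarrow> real"
    and c :: "nat \<Rightarrow> nat \<Rightarrow> real"
  assumes k_pos: "\<forall>i<r. k i > 0"
    and translation: "is_translation m n r y rho rho' nt ty trho trho' h1 h2 CRK kap"
    and basis: "adapted_basis m r y rho trho trho' h2 CRK kap sd p q c"
    and strongly_res: "strongly_resolvable m r y rho trho trho' h1 h2 CRK kap sd p q c k"
    and deficiency_zero: "struct_deficiency m nt r ty trho trho' = 0"
begin

abbreviation hinv :: "nat \<Rightarrow> nat" where
  "hinv \<equiv> the_inv_into {..<r} h1"

abbreviation improper :: "nat set" where
  "improper \<equiv> improper_reactions r rho CRK"

abbreviation adj :: "(nat \<Rightarrow> real) \<Rightarrow> nat \<Rightarrow> real" where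
  "adj \<equiv> adj_factor r trho trho' h1 h2 sd p q c"

lemma translated_crn: "is_crn m nt r ty trho trho'"
  using translation unfolding is_translation_def by blast

lemma h1_bij: "bij_betw h1 {..<r} {..<r}"
  using translation unfolding is_translation_def by blast

lemma hinv_less: "l < r \<Longrightarrow> hinv l < r"
  using h1_bij the_inv_into_into[of h1 "{..<r}"] unfolding bij_betw_def by auto

lemma hinv_h1: "i < r \<Longrightarrow> hinv (h1 i) = i"
  using h1_bij the_inv_into_f_f[of h1 "{..<r}"] unfolding bij_betw_def by auto

sublocale translated_graph: weakly_reversible_graph r trho trho'
  using translated_crn strongly_res
  by unfold_locales (auto simp: is_crn_def strongly_resolvable_def weakly_resolvable_def)

lemma kinetic_complex_self:
  assumes "d \<in> CRK" shows "kap (h2 d) = d"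
proof -
  have d: "d \<in> reactant_set r rho" using assms translation unfolding is_translation_def by blast
  then have "h2 d \<in> reactant_set r trho" using translation unfolding is_translation_def by blast
  then have "{e \<in> reactant_set r rho. h2 e = h2 d} \<inter> CRK = {kap (h2 d)}"
    using translation unfolding is_translation_def by blast
  moreover have "d \<in> {e \<in> reactant_set r rho. h2 e = h2 d} \<inter> CRK" using assms d by simp
  ultimately show ?thesis by simp
qed

lemma improper_vec_proper: "i \<notin> improper \<Longrightarrow> i < r \<Longrightarrow> improper_vec m y rho h2 kap i = 0"
  unfolding improper_reactions_def improper_vec_def by (simp add: kinetic_complex_self)

text \<open>The mass-action rate of reaction i of N at x is its state weight times the kinetic monomial
  x^{y_\<rho>(i)_K} of the translated reaction.\<close>
definition state_weights :: "(nat \<Rightarrow> real) \<Rightarrow> nat \<Rightarrow> real" where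
  "state_weights x i = k i * rpow_monom m x (improper_vec m y rho h2 kap i)"

lemma state_weights_semi_proper: "semi_proper_weights r rho CRK k (state_weights x)"
  unfolding semi_proper_weights_def state_weights_def
  using k_pos improper_vec_proper rpow_monom_zero rpow_monom_pos
  by (auto simp: improper_reactions_def)

lemma mas_rhs_eq_gmas_rhs_state_weights:
  assumes x: "\<forall>s<m. x s > 0" and s: "s < m"
  shows "mas_rhs m r y rho rho' k x s =
    gmas_rhs m r y ty trho trho' kap (\<lambda>l. state_weights x (hinv l)) x s"
proof -
  let ?g = "\<lambda>l. state_weights x (hinv l) * (real (ty (trho' l) s) - real (ty (trho l) s))
      * monom m x (y (kap (trho l)))"
  have "gmas_rhs m r y ty trho trho' kap (\<lambda>l. state_weights x (hinv l)) x s = (\<Sum>i<r. ?g (h1 i))"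
    unfolding gmas_rhs_def by (rule sum.reindex_bij_betw[OF h1_bij, symmetric])
  also have "\<dots> = (\<Sum>i<r. k i * (real (y (rho' i) s) - real (y (rho i) s)) * monom m x (y (rho i)))"
  proof (rule sum.cong[OF refl])
    fix i assume "i \<in> {..<r}"
    then have i: "i < r" by simp
    have "int (ty (trho' (h1 i)) s) - int (ty (trho (h1 i)) s) = int (y (rho' i) s) - int (y (rho i) s)"
      and kinetic: "trho (h1 i) = h2 (rho i)"
      using translation i s unfolding is_translation_def by auto
    then have "real (ty (trho' (h1 i)) s) - real (ty (trho (h1 i)) s) = real (y (rho' i) s) - real (y (rho i) s)"
      by (metis of_int_diff of_int_of_nat_eq)
    moreover have "rpow_monom m x (improper_vec m y rho h2 kap i) * monom m x (y (kap (h2 (rho i))))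
        = monom m x (y (rho i))"
      unfolding monom_eq_rpow_monom[OF x] rpow_monom_add[symmetric] improper_vec_def by simp
    ultimately show "?g (h1 i) = k i * (real (y (rho' i) s) - real (y (rho i) s)) * monom m x (y (rho i))"
      unfolding state_weights_def hinv_h1[OF i] kinetic by (simp add: mult_ac)
  qed
  finally show ?thesis unfolding mas_rhs_def by simp
qed

lemma steady_state_flux_balanced:
  assumes zero: "\<forall>s<m. gmas_rhs m r y ty trho trho' kap u x s = 0"
  shows "flux_balanced r trho trho' u (\<lambda>j. monom m x (y (kap j))) j"
proof -
  define psi where "psi l = u l * monom m x (y (kap (trho l)))" for l
  have range: "\<forall>l<r. trho l < nt \<and> trho' l < nt" using translated_crn unfolding is_crn_def by blast
  have "\<forall>s<m. (\<Sum>l<r. psi l * (real (ty (trho' l) s) - real (ty (trho l) s))) = 0"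
    using zero unfolding gmas_rhs_def psi_def by (simp add: mult_ac)
  then have "(\<Sum>l<r. psi l * incidence_col trho trho' l j) = 0"
    by (rule deficiency_zero_incidence_combination[OF range deficiency_zero])
  moreover have "(\<Sum>l<r. psi l * incidence_col trho trho' l j) =
      (\<Sum>l<r. if trho' l = j then psi l else 0) - (\<Sum>l<r. if trho l = j then psi l else 0)"
    unfolding incidence_col_def sum_subtractf[symmetric] by (intro sum.cong) auto
  ultimately have "(\<Sum>l\<in>{l. l < r \<and> trho' l = j}. psi l) = (\<Sum>l\<in>{l. l < r \<and> trho l = j}. psi l)"
    unfolding sum_if_lessThan by simp
  moreover have "(\<Sum>l\<in>{l. l < r \<and> trho l = j}. psi l) = (\<Sum>l\<in>{l. l < r \<and> trho l = j}. u l) * monom m x (y (kap j))"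
    unfolding psi_def sum_distrib_right by simp
  ultimately show ?thesis unfolding flux_balanced_def psi_def by simp
qed

text \<open>Expand the improper vector in the adapted basis; by complex balance each basis monomial is a
  ratio of tree constants.\<close>
lemma improper_monomial_eq_adj:
  assumes W: "semi_proper_weights r rho CRK k W" and x: "\<forall>s<m. x s > 0"
    and bal: "\<forall>j. flux_balanced r trho trho' (\<lambda>l. W (hinv l)) (\<lambda>j. monom m x (y (kap j))) j"
    and i: "i \<in> improper"
  shows "rpow_monom m x (improper_vec m y rho h2 kap i) = adj W i"
proof -
  let ?K = "tree_const r trho trho' (\<lambda>l. W (hinv l))"
  have u: "W (hinv l) > 0" if "l < r" for l
    using W k_pos hinv_less[OF that] unfolding semi_proper_weights_def by (cases "hinv l \<in> improper") auto
  have ratio: "rpow_monom m x (cvec m (y (p j)) - cvec m (y (q j))) = ?K (h2 (p j)) / ?K (h2 (q j))"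
    if "j < sd" for j
  proof -
    have pq: "p j \<in> CRK" "q j \<in> CRK" "h2 (q j) \<in> translated_graph.lc (h2 (p j))"
      using basis that unfolding adapted_basis_def by auto
    have "rpow_monom m x (cvec m (y (p j)) - cvec m (y (q j)))
        = monom m x (y (kap (h2 (p j)))) / monom m x (y (kap (h2 (q j))))"
      unfolding rpow_monom_diff monom_eq_rpow_monom[OF x] kinetic_complex_self[OF pq(1)]
        kinetic_complex_self[OF pq(2)] ..
    also have "\<dots> = ?K (h2 (p j)) / ?K (h2 (q j))"
      using translated_graph.flux_balanced_proportional_tree_const[where u = "\<lambda>l. W (hinv l)"
          and z = "\<lambda>j. monom m x (y (kap j))", OF u _ _ pq(3)] monom_pos[OF x] bal
      by blast
    finally show ?thesis .
  qed
  have "improper_vec m y rho h2 kap i = (\<Sum>j<sd. fscale (c i j) (cvec m (y (p j)) - cvec m (y (q j))))"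
    using basis i unfolding adapted_basis_def by blast
  then have "rpow_monom m x (improper_vec m y rho h2 kap i)
      = (\<Prod>j<sd. rpow_monom m x (cvec m (y (p j)) - cvec m (y (q j))) powr c i j)"
    by (simp add: rpow_monom_sum rpow_monom_fscale)
  also have "\<dots> = adj W i"
    unfolding adj_factor_def Let_def by (intro prod.cong) (simp_all add: ratio)
  finally show ?thesis .
qed

definition adjusted_rates :: "nat \<Rightarrow> real" where
  "adjusted_rates i = (if i \<in> improper then adj k i * k i else k i)"

lemma translated_rates_eq: "translated_rates r rho trho trho' h1 h2 CRK sd p q c k l = adjusted_rates (hinv l)"
  unfolding translated_rates_def adjusted_rates_def Let_def ..

lemma adj_pos: "adj k i > 0"
proof -
  have K: "tree_const r trho trho' (\<lambda>l. k (hinv l)) v > 0" for v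
    by (rule translated_graph.tree_const_pos) (simp add: k_pos hinv_less)
  show ?thesis unfolding adj_factor_def Let_def
  proof (rule prod_pos)
    fix j
    have "tree_const r trho trho' (\<lambda>l. k (hinv l)) (h2 (p j)) / tree_const r trho trho' (\<lambda>l. k (hinv l)) (h2 (q j)) > 0"
      using K[of "h2 (p j)"] K[of "h2 (q j)"] by (rule divide_pos_pos)
    then show "0 < (tree_const r trho trho' (\<lambda>l. k (hinv l)) (h2 (p j))
        / tree_const r trho trho' (\<lambda>l. k (hinv l)) (h2 (q j))) powr c i j"
      by (simp del: divide_eq_0_iff)
  qed
qed

lemma adjusted_rates_semi_proper: "semi_proper_weights r rho CRK k adjusted_rates"
  unfolding semi_proper_weights_def adjusted_rates_def improper_reactions_def
  using k_pos adj_pos by (simp add: mult_pos_pos)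

text \<open>Strong resolvability makes the adjustment factors independent of the free weights, so at
  every positive steady state the state weights are the adjusted rates.\<close>
lemma steady_state_weights:
  assumes W: "semi_proper_weights r rho CRK k W" and x: "\<forall>s<m. x s > 0"
    and zero: "\<forall>s<m. gmas_rhs m r y ty trho trho' kap (\<lambda>l. W (hinv l)) x s = 0"
    and i: "i < r"
  shows "state_weights x i = adjusted_rates i"
proof (cases "i \<in> improper")
  case True
  have "rpow_monom m x (improper_vec m y rho h2 kap i) = adj W i"
    using improper_monomial_eq_adj[OF W x _ True] steady_state_flux_balanced[OF zero] by blast
  also have "\<dots> = adj k i"
  proof -
    have "semi_proper_weights r rho CRK k k"
      unfolding semi_proper_weights_def improper_reactions_def using k_pos by simp
    then show ?thesis using strongly_res True W unfolding strongly_resolvable_def by blast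
  qed
  finally show ?thesis unfolding state_weights_def adjusted_rates_def using True by simp
next
  case False
  then show ?thesis
    unfolding state_weights_def adjusted_rates_def using improper_vec_proper[OF False i] rpow_monom_zero by simp
qed

lemma steady_states_coincide:
  "pos_steady_states m (gmas_rhs m r y ty trho trho' kap (translated_rates r rho trho trho' h1 h2 CRK sd p q c k))
   = pos_steady_states m (mas_rhs m r y rho rho' k)"
proof -
  let ?F = "\<lambda>u x. gmas_rhs m r y ty trho trho' kap (\<lambda>l. u (hinv l)) x"
  have adjusted_iff: "(\<forall>s<m. ?F adjusted_rates x s = 0) \<longleftrightarrow> (\<forall>s<m. ?F (state_weights x) x s = 0)"
    if x: "\<forall>s<m. x s > 0" for x
  proof -
    have same: "?F adjusted_rates x s = ?F (state_weights x) x s"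
      if "\<forall>i<r. state_weights x i = adjusted_rates i" for s
      using that hinv_less by (intro gmas_rhs_cong) simp
    show ?thesis
    proof
      assume "\<forall>s<m. ?F adjusted_rates x s = 0"
      then have "\<forall>i<r. state_weights x i = adjusted_rates i"
        using steady_state_weights[OF adjusted_rates_semi_proper x] by blast
      then show "\<forall>s<m. ?F (state_weights x) x s = 0" using same \<open>\<forall>s<m. ?F adjusted_rates x s = 0\<close> by simp
    next
      assume "\<forall>s<m. ?F (state_weights x) x s = 0"
      then have "\<forall>i<r. state_weights x i = adjusted_rates i"
        using steady_state_weights[OF state_weights_semi_proper x] by blast
      then show "\<forall>s<m. ?F adjusted_rates x s = 0" using same \<open>\<forall>s<m. ?F (state_weights x) x s = 0\<close> by simp
    qed
  qed
  have mas_iff: "(\<forall>s<m. mas_rhs m r y rho rho' k x s = 0) \<longleftrightarrow> (\<forall>s<m. ?F (state_weights x) x s = 0)"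
    if "\<forall>s<m. x s > 0" for x
    using mas_rhs_eq_gmas_rhs_state_weights[OF that] by simp
  show ?thesis unfolding pos_steady_states_def translated_rates_eq
  proof (rule Collect_cong)
    fix x
    show "((\<forall>s<m. 0 < x s) \<and> (\<forall>s<m. ?F adjusted_rates x s = 0)) \<longleftrightarrow>
        ((\<forall>s<m. 0 < x s) \<and> (\<forall>s<m. mas_rhs m r y rho rho' k x s = 0))"
      using adjusted_iff[of x] mas_iff[of x] by blast
  qed
qed

end

theorem lemma4p3:
  fixes m n r nt sd :: nat
    and y ty :: "nat \<Rightarrow> nat \<Rightarrow> nat"
    and rho rho' trho trho' h1 h2 kap p q :: "nat \<Rightarrow> nat"
    and CRK :: "nat set"
    and k :: "nat \<Rightarrow> real"
    and c :: "nat \<Rightarrow> nat \<Rightarrow> real"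
  assumes crn: "is_crn m n r y rho rho'"
    and kpos: "\<forall>i<r. k i > 0"
    and transl: "is_translation m n r y rho rho' nt ty trho trho' h1 h2 CRK kap"
    and improper: "\<not> inj_on h2 (reactant_set r rho)"
    and basis: "adapted_basis m r y rho trho trho' h2 CRK kap sd p q c"
    and strong: "strongly_resolvable m r y rho trho trho' h1 h2 CRK kap sd p q c k"
    and defic0: "struct_deficiency m nt r ty trho trho' = 0"
  shows "pos_steady_states m
           (gmas_rhs m r y ty trho trho' kap (translated_rates r rho trho trho' h1 h2 CRK sd p q c k))
         = pos_steady_states m (mas_rhs m r y rho rho' k)"
proof -
  interpret translated_network m n r nt sd y ty rho rho' trho trho' h1 h2 kap p q CRK k c
    using kpos transl basis strong defic0 by unfold_locales
  show ?thesis by (rule steady_states_coincide)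
qed

end
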